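(* Let $\mathsf{G}$ be a global type. If $\mathsf{G}$ is projectable, then its event structure $\mathcal{S}(\mathsf{G})$ is semantically projectable.
   Context: Participants are ranged over by $\mathsf{p},\mathsf{q},\mathsf{r},\mathsf{s}$ and message labels by $\lambda$. Global types are defined coinductively (and assumed regular, i.e. with finitely many distinct subtrees): $\mathsf{G} ::= \mathsf{p}\to\mathsf{q}:\{\lambda_i;\mathsf{G}_i\}_{i\in I} \mid \mathsf{End}$, with $I$ finite non-empty and the $\lambda_i$ pairwise distinct. Processes (coinductive): $P ::= \bigoplus_{i\in I}\mathsf{p}!\lambda_i;P_i \mid \sum_{i\in I}\mathsf{p}?\lambda_i;P_i \mid \mathbf{0}$. A communication is $\alpha=\mathsf{p}\mathsf{q}\lambda$ with $\mathrm{part}(\mathsf{p}\mathsf{q}\lambda)=\{\mathsf{p},\mathsf{q}\}$; a trace is a finite sequence of communications, $\mathrm{part}$ extended to traces by union. $\mathrm{Tr}(\mathsf{End})=\emptyset$, $\mathrm{Tr}(\mathsf{p}\to\mathsf{q}:\{\lambda_i;\mathsf{G}_i\}_{i\in I})=\{\mathsf{p}\mathsf{q}\lambda_i\cdot\sigma\mid i\in I,\ \sigma=\epsilon\text{ or }\sigma\in\mathrm{Tr}(\mathsf{G}_i)\}$, and $\mathrm{part}(\mathsf{G})=\bigcup_{\sigma\in\mathrm{Tr}(\mathsf{G})}\mathrm{part}(\sigma)$. Projection (coinductive, partial): $\mathsf{G}\upharpoonright\mathsf{r}=\mathbf{0}$ if $\mathsf{r}\notin\mathrm{part}(\mathsf{G})$;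 for $\mathsf{G}=\mathsf{p}\to\mathsf{q}:\{\lambda_i;\mathsf{G}_i\}_{i\in I}$: $\mathsf{G}\upharpoonright\mathsf{r}=\sum_{i\in I}\mathsf{p}?\lambda_i;(\mathsf{G}_i\upharpoonright\mathsf{r})$ if $\mathsf{r}=\mathsf{q}$; $=\bigoplus_{i\in I}\mathsf{q}!\lambda_i;(\mathsf{G}_i\upharpoonright\mathsf{r})$ if $\mathsf{r}=\mathsf{p}$; $=\mathsf{G}_1\upharpoonright\mathsf{r}$ if $\mathsf{r}\notin\{\mathsf{p},\mathsf{q}\}$, $\mathsf{r}\in\mathrm{part}(\mathsf{G}_1)$ and $\mathsf{G}_i\upharpoonright\mathsf{r}=\mathsf{G}_1\upharpoonright\mathsf{r}$ for all $i\in I$; undefined otherwise. $\mathsf{G}$ is projectable if $\mathsf{G}\upharpoonright\mathsf{p}$ is defined for all $\mathsf{p}$. Projection of a trace on $\mathsf{r}$: $\epsilon\upharpoonright\mathsf{r}=\epsilon$; $(\mathsf{p}\mathsf{q}\lambda\cdot\sigma)\upharpoonright\mathsf{r}$ equals $\mathsf{q}!\lambda\cdot(\sigma\upharpoonright\mathsf{r})$ if $\mathsf{r}=\mathsf{p}$, $\mathsf{p}?\lambda\cdot(\sigma\upharpoonright\mathsf{r})$ if $\mathsf{r}=\mathsf{q}$, and $\sigma\upharpoonright\mathsf{r}$ otherwise. Event structure of $\mathsf{G}$: permutation equivalence $\sim$ is the least equivalence on traces with $\sigma\cdot\alpha\cdot\alpha'\cdot\sigma'\sim\sigma\cdot\alpha'\cdot\alpha\cdot\sigma'$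 whenever $\mathrm{part}(\alpha)\cap\mathrm{part}(\alpha')=\emptyset$; $[\sigma]$ is the class of $\sigma$. A non-empty trace $\sigma=\sigma[1]\cdots\sigma[n]$ is pointed if for every $1\le i<n$ there is $j$ with $i<j\le n$ and $\mathrm{part}(\sigma[i])\cap\mathrm{part}(\sigma[j])\ne\emptyset$. A g-event is $[\sigma]$ with $\sigma$ pointed; its communication $\mathrm{cm}([\sigma])$ is the last element of $\sigma$ (independent of the representative). Causal prefixing: $\alpha\circ[\sigma]=[\alpha\cdot\sigma]$ if $\mathrm{part}(\alpha)\cap\mathrm{part}(\sigma)\ne\emptyset$, $=[\sigma]$ otherwise; $\epsilon\circ\gamma=\gamma$, $(\alpha\cdot\sigma)\circ\gamma=\alpha\circ(\sigma\circ\gamma)$. $\mathrm{ev}(\sigma\cdot\alpha)=\sigma\circ[\alpha]$. Causality: $\gamma\le\gamma'$ if $\gamma=[\sigma]$ and $\gamma'=[\sigma\cdot\sigma']$ for some $\sigma,\sigma'$. Conflict: $\gamma\#\gamma'$ if $\gamma=[\sigma\cdot\mathsf{p}\mathsf{q}\lambda_1\cdot\sigma_1]$, $\gamma'=[\sigma\cdot\mathsf{p}\mathsf{q}\lambda_2\cdot\sigma_2]$ with $\lambda_1\ne\lambda_2$. $\mathcal{S}(\mathsf{G})=(\mathcal{E}(\mathsf{G}),\le_{\mathsf{G}},\#_{\mathsf{G}})$ with $\mathcal{E}(\mathsf{G})=\{\mathrm{ev}(\sigma)\mid\sigma\in\mathrm{Tr}(\mathsf{G})\}$ and the relations restricted to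 $\mathcal{E}(\mathsf{G})$. Two events $\gamma_1,\gamma_2\in\mathcal{E}(\mathsf{G})$ are in initial conflict if $\gamma_1=[\sigma\cdot\mathsf{p}\mathsf{q}\lambda_1]$ and $\gamma_2=[\sigma\cdot\mathsf{p}\mathsf{q}\lambda_2]$ for some $\sigma,\mathsf{p},\mathsf{q}$ and $\lambda_1\ne\lambda_2$. $\mathcal{S}(\mathsf{G})$ is semantically projectable if for all $\gamma_1,\gamma_2\in\mathcal{E}(\mathsf{G})$ in initial conflict the following holds: whenever there is $\gamma_1'=[\sigma_1\cdot\alpha_1]\in\mathcal{E}(\mathsf{G})$ with $\gamma_1\le_{\mathsf{G}}\gamma_1'$ and a participant $\mathsf{r}\in\mathrm{part}(\alpha_1)\setminus\mathrm{part}(\mathrm{cm}(\gamma_1))$, there is $\gamma_2'=[\sigma_2\cdot\alpha_2]\in\mathcal{E}(\mathsf{G})$ with $\gamma_2\le_{\mathsf{G}}\gamma_2'$, $\alpha_2=\alpha_1$ and $\sigma_2\upharpoonright\mathsf{r}=\sigma_1\upharpoonright\mathsf{r}$. *)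

theory Defs
  imports Main
begin

text \<open>A global type p -> q : {l_i ; G_i}_{i in I} is represented by
  Com p q bs where bs is the list of branches (l_i, G_i).\<close>

codatatype ('p, 'l) gty = End | Com 'p 'p "('l \<times> ('p, 'l) gty) list"

coinductive wf_gty :: "('p, 'l) gty \<Rightarrow> bool" where
  "wf_gty End"
| "bs \<noteq> [] \<Longrightarrow> distinct (map fst bs) \<Longrightarrow> p \<noteq> q \<Longrightarrow>
   (\<forall>b \<in> set bs. wf_gty (snd b)) \<Longrightarrow> wf_gty (Com p q bs)"

inductive_set subtrees :: "('p, 'l) gty \<Rightarrow> ('p, 'l) gty set" for G where
  "G \<in> subtrees G"
| "Com p q bs \<in> subtrees G \<Longrightarrow> b \<in> set bs \<Longrightarrow> snd b \<in> subtrees G"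

definition regular :: "('p, 'l) gty \<Rightarrow> bool" where
  "regular G \<longleftrightarrow> finite (subtrees G)"

type_synonym ('p, 'l) comm = "'p \<times> 'p \<times> 'l"
type_synonym ('p, 'l) trace = "('p, 'l) comm list"

fun partc :: "('p, 'l) comm \<Rightarrow> 'p set" where
  "partc (p, q, l) = {p, q}"

definition partt :: "('p, 'l) trace \<Rightarrow> 'p set" where
  "partt \<sigma> = (\<Union>a \<in> set \<sigma>. partc a)"

inductive is_trace :: "('p, 'l) gty \<Rightarrow> ('p, 'l) trace \<Rightarrow> bool" where
  "(l, G') \<in> set bs \<Longrightarrow> is_trace (Com p q bs) [(p, q, l)]"
| "(l, G') \<in> set bs \<Longrightarrow> is_trace G' \<sigma> \<Longrightarrow> is_trace (Com p q bs) ((p, q, l) # \<sigma>)"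

definition Tr :: "('p, 'l) gty \<Rightarrow> ('p, 'l) trace set" where
  "Tr G = {\<sigma>. is_trace G \<sigma>}"

definition partg :: "('p, 'l) gty \<Rightarrow> 'p set" where
  "partg G = (\<Union>\<sigma> \<in> Tr G. partt \<sigma>)"

codatatype ('p, 'l) proc =
    Send 'p "('l \<times> ('p, 'l) proc) list"
  | Recv 'p "('l \<times> ('p, 'l) proc) list"
  | Nil

text \<open>The coinductive partial projection function is rendered as a coinductive
  relation: proj G r P means G restricted to r is defined and equals P.\<close>

coinductive proj :: "('p, 'l) gty \<Rightarrow> 'p \<Rightarrow> ('p, 'l) proc \<Rightarrow> bool" where
  proj_out: "r \<notin> partg G \<Longrightarrow> proj G r Nil"
| proj_recv: "r \<in> partg (Com p q bs) \<Longrightarrow> r = q \<Longrightarrow>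
     list_all2 (\<lambda>b c. fst b = fst c \<and> proj (snd b) r (snd c)) bs cs \<Longrightarrow>
     proj (Com p q bs) r (Recv p cs)"
| proj_send: "r \<in> partg (Com p q bs) \<Longrightarrow> r = p \<Longrightarrow> r \<noteq> q \<Longrightarrow>
     list_all2 (\<lambda>b c. fst b = fst c \<and> proj (snd b) r (snd c)) bs cs \<Longrightarrow>
     proj (Com p q bs) r (Send q cs)"
| proj_skip: "r \<notin> {p, q} \<Longrightarrow> bs \<noteq> [] \<Longrightarrow> r \<in> partg (snd (hd bs)) \<Longrightarrow>
     (\<forall>b \<in> set bs. proj (snd b) r P) \<Longrightarrow> proj (Com p q bs) r P"

definition projectable :: "('p, 'l) gty \<Rightarrow> bool" where
  "projectable G \<longleftrightarrow> (\<forall>r. \<exists>P. proj G r P)"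

datatype ('p, 'l) act = Out 'p 'l | In 'p 'l

fun projt :: "('p, 'l) trace \<Rightarrow> 'p \<Rightarrow> ('p, 'l) act list" where
  "projt [] r = []"
| "projt ((p, q, l) # \<sigma>) r =
     (if r = p then Out q l # projt \<sigma> r
      else if r = q then In p l # projt \<sigma> r
      else projt \<sigma> r)"

inductive swap :: "('p, 'l) trace \<Rightarrow> ('p, 'l) trace \<Rightarrow> bool" where
  "partc a \<inter> partc a' = {} \<Longrightarrow> swap (\<sigma> @ a # a' # \<sigma>') (\<sigma> @ a' # a # \<sigma>')"

text \<open>swap is symmetric, so its reflexive transitive closure is the least
  equivalence containing it.\<close>
definition perm_eq :: "('p, 'l) trace \<Rightarrow> ('p, 'l) trace \<Rightarrow> bool" where
  "perm_eq = (swap\<^sup>*\<^sup>*)"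

definition cls :: "('p, 'l) trace \<Rightarrow> ('p, 'l) trace set" where
  "cls \<sigma> = {\<tau>. perm_eq \<sigma> \<tau>}"

definition pointed :: "('p, 'l) trace \<Rightarrow> bool" where
  "pointed \<sigma> \<longleftrightarrow> \<sigma> \<noteq> [] \<and>
     (\<forall>i. Suc i < length \<sigma> \<longrightarrow>
        (\<exists>j. i < j \<and> j < length \<sigma> \<and> partc (\<sigma> ! i) \<inter> partc (\<sigma> ! j) \<noteq> {}))"

definition cm :: "('p, 'l) trace set \<Rightarrow> ('p, 'l) comm" where
  "cm \<gamma> = last (SOME \<sigma>. \<sigma> \<in> \<gamma> \<and> pointed \<sigma>)"

text \<open>Causal prefixing, computed on representatives:
  cpre \<sigma> \<tau> is a representative of \<sigma> \<circ> [\<tau>].\<close>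
fun cpre :: "('p, 'l) trace \<Rightarrow> ('p, 'l) trace \<Rightarrow> ('p, 'l) trace" where
  "cpre [] \<tau> = \<tau>"
| "cpre (a # \<sigma>) \<tau> =
     (let \<tau>' = cpre \<sigma> \<tau> in if partc a \<inter> partt \<tau>' \<noteq> {} then a # \<tau>' else \<tau>')"

definition ev :: "('p, 'l) trace \<Rightarrow> ('p, 'l) trace set" where
  "ev \<sigma> = cls (cpre (butlast \<sigma>) [last \<sigma>])"

definition events :: "('p, 'l) gty \<Rightarrow> ('p, 'l) trace set set" where
  "events G = {ev \<sigma> | \<sigma>. \<sigma> \<in> Tr G}"

definition causal :: "('p, 'l) trace set \<Rightarrow> ('p, 'l) trace set \<Rightarrow> bool" where
  "causal \<gamma> \<gamma>' \<longleftrightarrow> (\<exists>\<sigma> \<sigma>'. \<gamma> = cls \<sigma> \<and> \<gamma>' = cls (\<sigma> @ \<sigma>'))"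

definition initial_conflict :: "('p, 'l) gty \<Rightarrow> ('p, 'l) trace set \<Rightarrow> ('p, 'l) trace set \<Rightarrow> bool" where
  "initial_conflict G \<gamma>1 \<gamma>2 \<longleftrightarrow> \<gamma>1 \<in> events G \<and> \<gamma>2 \<in> events G \<and>
     (\<exists>\<sigma> p q l1 l2. l1 \<noteq> l2 \<and> \<gamma>1 = cls (\<sigma> @ [(p, q, l1)]) \<and> \<gamma>2 = cls (\<sigma> @ [(p, q, l2)]))"

definition sem_projectable :: "('p, 'l) gty \<Rightarrow> bool" where
  "sem_projectable G \<longleftrightarrow>
    (\<forall>\<gamma>1 \<gamma>2. initial_conflict G \<gamma>1 \<gamma>2 \<longrightarrow>
      (\<forall>\<sigma>1 \<alpha>1 r. cls (\<sigma>1 @ [\<alpha>1]) \<in> events G \<and> causal \<gamma>1 (cls (\<sigma>1 @ [\<alpha>1])) \<and>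
          r \<in> partc \<alpha>1 - partc (cm \<gamma>1) \<longrightarrow>
        (\<exists>\<sigma>2. cls (\<sigma>2 @ [\<alpha>1]) \<in> events G \<and> causal \<gamma>2 (cls (\<sigma>2 @ [\<alpha>1])) \<and>
           projt \<sigma>2 r = projt \<sigma>1 r)))"

end

theory Submission
  imports Defs "HOL-Library.Sublist"
begin

text \<open>Let [\<sigma> pq\<lambda>1] and [\<sigma> pq\<lambda>2] be in initial conflict and let [\<sigma>1 \<alpha>] extend the
  first, with r a participant of \<alpha> other than p and q.  A trace of G realising [\<sigma>1 \<alpha>] has
  the form \<rho>0 pq\<lambda>1 \<rho>, where \<rho>0 leads to the choice p \<rightarrow> q and \<sigma> is the causal past of
  that choice in \<rho>0.  Projectability gives three things: p's projection fixes the labels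
  offered at the choice, so \<lambda>2 selects a branch G2 as well; every participant other than p and q
  has a common projection in the branches G1 and G2; and guided by these projections \<rho> can be
  replayed in G2 as a trace \<rho>' ending in \<alpha>, with the same projection on r and, for all
  participants other than p and q, projections comparable with those of \<rho>.  Comparable
  projections that agree on r determine the same causal past of \<alpha> through these participants,
  so pq\<lambda>2 causally precedes \<alpha> in \<rho>0 pq\<lambda>2 \<rho>', whose event is the required [\<sigma>2 \<alpha>].\<close>

section \<open>Local views of traces\<close>

definition local_act :: "('p, 'l) comm \<Rightarrow> 'p \<Rightarrow> ('p, 'l) act" where
  "local_act c s = (case c of (p, q, l) \<Rightarrow> if s = p then Out q l else In p l)"

fun partner :: "('p, 'l) act \<Rightarrow> 'p" where
  "partner (Out p l) = p"
| "partner (In p l) = p"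

lemma local_act_sender [simp]: "local_act (p, q, l) p = Out q l"
  by (simp add: local_act_def)

lemma local_act_receiver [simp]: "p \<noteq> q \<Longrightarrow> local_act (p, q, l) q = In p l"
  by (simp add: local_act_def)

lemma partt_simps [simp]:
  "partt [] = {}" "partt (a # w) = partc a \<union> partt w" "partt (u @ w) = partt u \<union> partt w"
  by (auto simp: partt_def)

lemma partc_nonempty: "partc c \<noteq> {}"
  by (cases c) auto

lemma finite_partc: "finite (partc c)"
  by (cases c) auto

lemma finite_partt: "finite (partt w)"
  by (simp add: partt_def finite_partc)

lemma projt_append [simp]: "projt (u @ w) r = projt u r @ projt w r"
  by (induction u r rule: projt.induct) auto

lemma prefix_projt: "prefix u w \<Longrightarrow> prefix (projt u s) (projt w s)"
  by (auto simp: prefix_def)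

lemma projt_Cons: "projt (c # w) s = (if s \<in> partc c then local_act c s # projt w s else projt w s)"
  by (cases c) (auto simp: local_act_def)

lemma projt_single: "projt [c] s = (if s \<in> partc c then [local_act c s] else [])"
  by (simp add: projt_Cons)

lemma projt_eq_Nil_iff: "projt w s = [] \<longleftrightarrow> s \<notin> partt w"
  by (induction w) (auto simp: projt_Cons)

lemma local_act_in_projt: "e \<in> set w \<Longrightarrow> s \<in> partc e \<Longrightarrow> local_act e s \<in> set (projt w s)"
  by (induction w) (auto simp: projt_Cons)

lemma in_set_projtE:
  assumes "x \<in> set (projt w s)"
  obtains e where "e \<in> set w" "s \<in> partc e" "local_act e s = x"
  using assms by (induction w) (auto simp: projt_Cons split: if_splits)

lemma local_act_inj: "s \<in> partc c \<Longrightarrow> s \<in> partc e \<Longrightarrow> local_act c s = local_act e s \<Longrightarrow> c = e"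
  by (cases c; cases e) (auto simp: local_act_def split: if_splits)

lemma local_act_Out: "p \<in> partc c \<Longrightarrow> local_act c p = Out q l \<Longrightarrow> c = (p, q, l)"
  by (cases c) (auto simp: local_act_def split: if_splits)

lemma partner_local_act: "s \<in> partc e \<Longrightarrow> partner (local_act e s) \<in> partc e"
  by (cases e) (auto simp: local_act_def)

lemma partner_local_act_eq: "s \<in> partc e \<Longrightarrow> t \<in> partc e \<Longrightarrow> s \<noteq> t \<Longrightarrow> partner (local_act e s) = t"
  by (cases e) (auto simp: local_act_def)

lemma partner_local_act_iff:
  "s \<in> partc c \<Longrightarrow> s \<noteq> t \<Longrightarrow> partner (local_act c s) = t \<longleftrightarrow> partc c = {s, t}"
  by (cases c) (auto simp: local_act_def doubleton_eq_iff)

lemma last_eq_if_projt_eq: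
  assumes "u \<noteq> []" "w \<noteq> []" "r \<in> partc (last u)" "r \<in> partc (last w)" "projt u r = projt w r"
  shows "last u = last w"
proof -
  have "projt (butlast u @ [last u]) r = projt (butlast w @ [last w]) r"
    using assms(1,2,5) by simp
  then have "local_act (last u) r = local_act (last w) r"
    using assms(3,4) by (simp add: projt_single)
  then show ?thesis using assms(3,4) local_act_inj by metis
qed

lemma split_at_projt:
  assumes "prefix (h @ [local_act c s]) (projt w s)" "s \<in> partc c"
  obtains w0 w1 where "w = w0 @ c # w1" "projt w0 s = h"
  using assms(1)
proof (induction w arbitrary: h thesis)
  case Nil then show ?case by simp
next
  case (Cons e w)
  show ?case
  proof (cases "s \<in> partc e")
    case True
    show ?thesis
    proof (cases h)
      case Nil
      then have "local_act c s = local_act e s" using Cons.prems(2) True by (simp add: projt_Cons)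
      then have "e = c" using local_act_inj assms(2) True by metis
      then show ?thesis using Cons.prems(1)[of "[]"] Nil by simp
    next
      case (Cons h0 h')
      then have "h0 = local_act e s" "prefix (h' @ [local_act c s]) (projt w s)"
        using Cons.prems(2) True by (auto simp: projt_Cons)
      moreover obtain w0 w1 where "w = w0 @ c # w1" "projt w0 s = h'"
        using Cons.IH calculation(2) by blast
      ultimately show ?thesis
        using Cons.prems(1)[of "e # w0" w1] True \<open>h = h0 # h'\<close> by (simp add: projt_Cons)
    qed
  next
    case False
    then obtain w0 w1 where "w = w0 @ c # w1" "projt w0 s = h"
      using Cons.IH Cons.prems(2) by (simp add: projt_Cons) blast
    then show ?thesis using Cons.prems(1)[of "e # w0" w1] False by (simp add: projt_Cons)
  qed
qed

lemma filter_partner_projt: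
  "s \<noteq> t \<Longrightarrow> filter (\<lambda>x. partner x = t) (projt w s) =
     map (\<lambda>c. local_act c s) (filter (\<lambda>c. partc c = {s, t}) w)"
proof (induction w)
  case (Cons c w)
  then show ?case
    by (cases "s \<in> partc c") (auto simp: projt_Cons partner_local_act_iff)
qed simp

lemma length_filter_partner_projt:
  "s \<noteq> t \<Longrightarrow> length (filter (\<lambda>x. partner x = t) (projt w s)) = length (filter (\<lambda>c. partc c = {s, t}) w)"
  by (simp add: filter_partner_projt)

definition comparable :: "'a list \<Rightarrow> 'a list \<Rightarrow> bool" where
  "comparable x y \<longleftrightarrow> prefix x y \<or> prefix y x"

lemma comparable_sym: "comparable x y \<Longrightarrow> comparable y x"
  by (auto simp: comparable_def)

lemma comparable_if_prefix: "prefix x y \<Longrightarrow> comparable x y"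
  by (simp add: comparable_def)

lemma comparable_if_common_extension: "prefix x z \<Longrightarrow> prefix y z \<Longrightarrow> comparable x y"
  unfolding comparable_def using prefix_same_cases by blast

lemma comparable_prefix: "prefix u x \<Longrightarrow> comparable x z \<Longrightarrow> comparable u z"
  unfolding comparable_def using prefix_same_cases prefix_order.trans by blast

text \<open>Otherwise t would have seen fewer s-t communications in z than s has.\<close>

lemma prefix_projt_transfer:
  assumes st: "s \<noteq> t" "s \<in> partc a" "t \<in> partc a"
    and s_prefix: "prefix (projt (xs @ [a]) s) (projt z s)"
    and t_comparable: "comparable (projt (xs @ [a]) t) (projt z t)"
  shows "prefix (projt (xs @ [a]) t) (projt z t)"
proof (rule ccontr)
  assume not_prefix: "\<not> ?thesis"
  let ?C = "\<lambda>w. length (filter (\<lambda>c. partc c = {s, t}) w)"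
  have "prefix (projt z t) (projt xs t @ [local_act a t])"
    using t_comparable not_prefix st(3) by (auto simp: comparable_def projt_single)
  moreover have "projt z t \<noteq> projt xs t @ [local_act a t]"
    using not_prefix st(3) by (auto simp: projt_single)
  ultimately have "prefix (projt z t) (projt xs t)"
    by simp
  have ts: "{t, s} = {s, t}" by blast
  have "?C z = length (filter (\<lambda>x. partner x = s) (projt z t))"
    using length_filter_partner_projt[of t s z] st(1) ts by simp
  also have "\<dots> \<le> length (filter (\<lambda>x. partner x = s) (projt xs t))"
    by (rule prefix_length_le[OF filter_mono_prefix]) fact
  also have "\<dots> = ?C xs"
    using length_filter_partner_projt[of t s xs] st(1) ts by simp
  finally have "?C z \<le> ?C xs" .
  have "?C (xs @ [a]) = length (filter (\<lambda>x. partner x = t) (projt (xs @ [a]) s))"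
    by (rule length_filter_partner_projt[symmetric, OF st(1)])
  also have "\<dots> \<le> length (filter (\<lambda>x. partner x = t) (projt z s))"
    by (rule prefix_length_le[OF filter_mono_prefix[OF s_prefix]])
  also have "\<dots> = ?C z"
    by (rule length_filter_partner_projt[OF st(1)])
  finally have "?C (xs @ [a]) \<le> ?C z" .
  moreover have "partc a = {s, t}"
    using st by (cases a) auto
  ultimately show False
    using \<open>?C z \<le> ?C xs\<close> by simp
qed

text \<open>The k-th communication between p and q is the k-th output of p to q and the k-th
  input of q from p.\<close>

lemma matching_labels:
  assumes "p \<noteq> q"
    and "projt w p = projt z p @ Out q l # R"
    and "projt w q = projt z q @ In p l' # R'"
  shows "l = l'"
proof -
  define F where "F = filter (\<lambda>c. partc c = {p, q}) w"
  define k where "k = length (filter (\<lambda>c. partc c = {p, q}) z)"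
  have qp: "{q, p} = {p, q}" by blast
  have Fp: "map (\<lambda>c. local_act c p) F =
      filter (\<lambda>x. partner x = q) (projt z p) @ Out q l # filter (\<lambda>x. partner x = q) R"
    using filter_partner_projt[OF assms(1), of w] assms(2) unfolding F_def by simp
  have kp: "length (filter (\<lambda>x. partner x = q) (projt z p)) = k"
    unfolding k_def by (rule length_filter_partner_projt[OF assms(1)])
  have Fq: "map (\<lambda>c. local_act c q) F =
      filter (\<lambda>x. partner x = p) (projt z q) @ In p l' # filter (\<lambda>x. partner x = p) R'"
    using filter_partner_projt[of q p w] assms(1,3) unfolding F_def qp by simp
  have kq: "length (filter (\<lambda>x. partner x = p) (projt z q)) = k"
    unfolding k_def using length_filter_partner_projt[of q p z] assms(1) qp by simp
  have "length (map (\<lambda>c. local_act c p) F) > k"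
    unfolding Fp using kp by simp
  then have k: "k < length F" by simp
  have "local_act (F ! k) p = Out q l"
    using arg_cong[OF Fp, of "\<lambda>xs. xs ! k"] k kp by (simp add: nth_append)
  moreover have "local_act (F ! k) q = In p l'"
    using arg_cong[OF Fq, of "\<lambda>xs. xs ! k"] k kq by (simp add: nth_append)
  moreover have "partc (F ! k) = {p, q}"
    using nth_mem[OF k] unfolding F_def by simp
  ultimately show ?thesis
    using local_act_Out[of p "F ! k" q l] assms(1) by simp
qed

section \<open>Permutation equivalence\<close>

lemma swap_sym: "swap x y \<Longrightarrow> swap y x"
  by (induction rule: swap.induct) (metis inf_commute swap.intros)

lemma swap_projt: "swap x y \<Longrightarrow> projt x s = projt y s"
  by (induction rule: swap.induct) (auto simp: projt_Cons)

lemma perm_eq_projt: "perm_eq u v \<Longrightarrow> projt u s = projt v s"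
  unfolding perm_eq_def by (induction rule: rtranclp_induct) (auto dest: swap_projt)

lemma perm_eq_refl: "perm_eq u u"
  by (simp add: perm_eq_def)

lemma perm_eq_trans: "perm_eq u v \<Longrightarrow> perm_eq v w \<Longrightarrow> perm_eq u w"
  by (simp add: perm_eq_def)

lemma perm_eq_sym: "perm_eq u v \<Longrightarrow> perm_eq v u"
  unfolding perm_eq_def
  by (induction rule: rtranclp_induct) (auto intro: converse_rtranclp_into_rtranclp swap_sym)

lemma perm_eq_append:
  assumes "perm_eq x y"
  shows "perm_eq (z @ x @ w) (z @ y @ w)"
proof -
  have swap_append: "swap (z @ x @ w) (z @ y @ w)" if "swap x y" for x y
    using that by (induction rule: swap.induct) (metis append.assoc append_Cons swap.intros)
  from assms show ?thesis
    unfolding perm_eq_def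
    by (induction rule: rtranclp_induct) (auto intro: rtranclp.rtrancl_into_rtrancl swap_append)
qed

lemma cls_eq_iff: "cls u = cls v \<longleftrightarrow> perm_eq u v"
  unfolding cls_def using perm_eq_refl perm_eq_trans perm_eq_sym by blast

lemma perm_eq_move_to_front: "partt u \<inter> partc c = {} \<Longrightarrow> perm_eq (u @ c # w) (c # u @ w)"
proof (induction u)
  case Nil then show ?case by (simp add: perm_eq_refl)
next
  case (Cons a u)
  then have "perm_eq ([a] @ (u @ c # w) @ []) ([a] @ (c # u @ w) @ [])"
    by (intro perm_eq_append) auto
  moreover have "swap ([] @ a # c # u @ w) ([] @ c # a # u @ w)"
    using Cons.prems by (intro swap.intros) auto
  ultimately show ?case
    unfolding perm_eq_def by simp
qed

lemma Nil_if_projt_Nil: "(\<And>s. projt u s = []) \<Longrightarrow> u = []"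
  by (metis equals0I partc_nonempty partt_simps(2) projt_eq_Nil_iff Un_empty list.exhaust)

text \<open>The first occurrence in w of the next communication of u can be moved to the front.\<close>

lemma perm_eq_append_if_prefix_projt:
  "(\<And>s. prefix (projt u s) (projt w s)) \<Longrightarrow> \<exists>v. perm_eq w (u @ v)"
proof (induction u arbitrary: w)
  case Nil then show ?case by (auto intro: perm_eq_refl)
next
  case (Cons c u)
  obtain t where t: "t \<in> partc c" using partc_nonempty[of c] by blast
  have "local_act c t \<in> set (projt w t)"
    using Cons.prems[of t] t by (auto simp: projt_Cons prefix_def)
  then have "c \<in> set w" by (metis in_set_projtE local_act_inj t)
  then obtain wa wb where w: "w = wa @ c # wb" "c \<notin> set wa" by (meson split_list_first)
  have disj: "partt wa \<inter> partc c = {}"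
  proof (rule ccontr)
    assume "partt wa \<inter> partc c \<noteq> {}"
    then obtain s where s: "s \<in> partt wa" "s \<in> partc c" by blast
    then have "projt wa s \<noteq> []" by (simp add: projt_eq_Nil_iff)
    moreover have "prefix (local_act c s # projt u s) (projt wa s @ projt (c # wb) s)"
      using Cons.prems[of s] w s(2) by (simp add: projt_Cons)
    ultimately have "local_act c s \<in> set (projt wa s)"
      by (cases "projt wa s") auto
    then show False by (metis in_set_projtE local_act_inj s(2) w(2))
  qed
  have front: "perm_eq w (c # wa @ wb)"
    using perm_eq_move_to_front[OF disj] w(1) by simp
  have "prefix (projt u s) (projt (wa @ wb) s)" for s
    using Cons.prems[of s] perm_eq_projt[OF front, of s] projt_Cons[of c] by (simp split: if_splits)
  then obtain v where "perm_eq (wa @ wb) (u @ v)" using Cons.IH by blast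
  then have "perm_eq ([c] @ (wa @ wb) @ []) ([c] @ (u @ v) @ [])" by (rule perm_eq_append)
  then show ?case using front perm_eq_trans by fastforce
qed

lemma perm_eq_iff_projt: "perm_eq u w \<longleftrightarrow> (\<forall>s. projt u s = projt w s)"
proof
  assume "\<forall>s. projt u s = projt w s"
  then obtain v where v: "perm_eq w (u @ v)"
    using perm_eq_append_if_prefix_projt[of u w] by auto
  then have "v = []"
    using perm_eq_projt[OF v] \<open>\<forall>s. projt u s = projt w s\<close> by (intro Nil_if_projt_Nil) simp
  then show "perm_eq u w" using v perm_eq_sym by simp
qed (simp add: perm_eq_projt)

lemma causal_projt_prefix: "causal (cls u) (cls w) \<Longrightarrow> prefix (projt u s) (projt w s)"
  unfolding causal_def cls_eq_iff perm_eq_iff_projt by (auto simp: prefix_def)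

section \<open>Causal pasts\<close>

text \<open>past S xs T keeps the communications of xs on which the participants T causally
  depend, when causality is only propagated through participants in S.\<close>

fun past :: "'p set \<Rightarrow> ('p, 'l) trace \<Rightarrow> 'p set \<Rightarrow> ('p, 'l) trace" where
  "past S [] T = []"
| "past S (a # xs) T =
     (let A = past S xs T in if partc a \<inter> (partt A \<union> T) \<inter> S \<noteq> {} then a # A else A)"

lemma cpre_eq_past: "cpre xs \<tau> = past UNIV xs (partt \<tau>) @ \<tau>"
  by (induction xs) (auto simp: Let_def)

lemma cpre_single: "cpre xs [c] = past UNIV xs (partc c) @ [c]"
  by (simp add: cpre_eq_past)

lemma past_member_meets: "e \<in> set (past S xs T) \<Longrightarrow> partc e \<inter> S \<noteq> {}"
  by (induction xs) (auto simp: Let_def split: if_splits)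

lemma projt_past: "t \<in> T \<Longrightarrow> t \<in> S \<Longrightarrow> projt (past S xs T) t = projt xs t"
  by (induction xs) (auto simp: Let_def projt_Cons)

lemma prefix_projt_past: "t \<in> S \<Longrightarrow> prefix (projt (past S xs T) t) (projt xs t)"
proof (induction xs)
  case (Cons a xs)
  show ?case
  proof (cases "partc a \<inter> (partt (past S xs T) \<union> T) \<inter> S = {} \<and> t \<in> partc a")
    case True
    then have "projt (past S xs T) t = []"
      using Cons.prems by (auto simp: projt_eq_Nil_iff)
    then show ?thesis using True by (simp add: Let_def)
  next
    case False
    then show ?thesis using Cons by (auto simp: Let_def projt_Cons)
  qed
qed simp

lemma prefix_projt_past_snoc:
  "t \<in> S \<Longrightarrow> prefix (projt (past S xs (partc \<alpha>) @ [\<alpha>]) t) (projt (xs @ [\<alpha>]) t)"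
  by (cases "t \<in> partc \<alpha>") (simp_all add: projt_past prefix_projt_past projt_single)

lemma past_idem: "past S (past S xs T) T = past S xs T"
  by (induction xs) (auto simp: Let_def)

lemma partt_past_Cons: "partt (past S xs T) \<subseteq> partt (past S (a # xs) T)"
  by (auto simp: Let_def)

lemma partt_past_subset: "partt (past S xs T) \<subseteq> partt (past UNIV xs T)"
  by (induction xs) (auto simp: Let_def)

lemma past_eq_past_Compl:
  "D \<inter> partt (past UNIV xs T) = {} \<Longrightarrow> D \<inter> T = {} \<Longrightarrow> past UNIV xs T = past (- D) xs T"
proof (induction xs)
  case (Cons a xs)
  have "D \<inter> partt (past UNIV xs T) = {}"
    using Cons.prems(1) partt_past_Cons[of UNIV xs T a] by blast
  with Cons show ?case by (auto simp: Let_def)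
qed simp

text \<open>A causal chain from T into D, which T avoids, starts with a segment through
  participants outside D.\<close>

lemma past_Compl_meets:
  "D \<inter> T = {} \<Longrightarrow> D \<inter> partt (past UNIV xs T) \<noteq> {} \<Longrightarrow> D \<inter> partt (past (- D) xs T) \<noteq> {}"
proof (induction xs)
  case (Cons a xs)
  show ?case
  proof (cases "D \<inter> partt (past UNIV xs T) = {}")
    case False
    then show ?thesis using Cons partt_past_Cons[of "- D" xs T a] by blast
  next
    case True
    have "past UNIV xs T = past (- D) xs T" using past_eq_past_Compl[OF True Cons.prems(1)] .
    then show ?thesis using Cons.prems True by (auto simp: Let_def split: if_splits)
  qed
qed simp

text \<open>The agreement with z on the participants of \<alpha> is propagated backwards along the
  causal chains of the restricted past, one shared participant at a time.\<close>

lemma prefix_projt_past_invariant: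
  assumes comparable: "\<And>t X0. t \<in> S \<Longrightarrow> prefix X0 (X @ [\<alpha>]) \<Longrightarrow> comparable (projt X0 t) (projt z t)"
    and base: "\<And>t. t \<in> S \<Longrightarrow> t \<in> partc \<alpha> \<Longrightarrow> prefix (projt (X @ [\<alpha>]) t) (projt z t)"
    and "xs @ ys = X" "t \<in> S" "t \<in> partt (past S ys (partc \<alpha>) @ [\<alpha>])"
  shows "prefix (projt (xs @ past S ys (partc \<alpha>) @ [\<alpha>]) t) (projt z t)"
  using assms(3-5)
proof (induction ys arbitrary: xs t)
  case Nil
  then show ?case using base by simp
next
  case (Cons a ys)
  let ?W = "past S ys (partc \<alpha>) @ [\<alpha>]"
  have IH: "prefix (projt (xs @ [a] @ ?W) t) (projt z t)"
    if "t \<in> S" "t \<in> partt ?W" for t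
    using Cons.IH[of "xs @ [a]" t] Cons.prems(1) that by simp
  show ?case
  proof (cases "partc a \<inter> partt ?W \<inter> S = {}")
    case True
    then have "t \<notin> partc a" "t \<in> partt ?W"
      using Cons.prems by (auto simp: Let_def split: if_splits)
    then show ?thesis
      using IH[OF Cons.prems(2)] True by (simp add: Let_def projt_Cons)
  next
    case False
    then have kept: "past S (a # ys) (partc \<alpha>) = a # past S ys (partc \<alpha>)"
      by (auto simp: Let_def)
    show ?thesis
    proof (cases "t \<in> partt ?W")
      case True
      then show ?thesis using IH[OF Cons.prems(2)] kept by simp
    next
      case False
      then have t: "t \<in> partc a" "projt ?W t = []"
        using Cons.prems(3) kept by (auto simp: projt_eq_Nil_iff)
      obtain s where s: "s \<in> partc a" "s \<in> partt ?W" "s \<in> S"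
        using \<open>partc a \<inter> partt ?W \<inter> S \<noteq> {}\<close> by blast
      have "prefix (projt (xs @ [a]) s) (projt z s)"
        using IH[OF s(3,2)] by (metis append_prefixD append.assoc projt_append)
      moreover have "prefix (xs @ [a]) (X @ [\<alpha>])"
        using Cons.prems(1) by (auto simp: prefix_def)
      then have "comparable (projt (xs @ [a]) t) (projt z t)"
        by (rule comparable[OF Cons.prems(2)])
      moreover have "s \<noteq> t" using s(2) False by blast
      ultimately have "prefix (projt (xs @ [a]) t) (projt z t)"
        using prefix_projt_transfer[OF _ s(1) t(1)] by blast
      then show ?thesis using kept t by (simp add: projt_Cons projt_single)
    qed
  qed
qed

lemma prefix_projt_past_if_comparable:
  assumes r: "r \<in> partc \<alpha>" "r \<in> S" and r_eq: "projt X r = projt Y r"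
    and comparable: "\<And>t. t \<in> S \<Longrightarrow> comparable (projt (X @ [\<alpha>]) t) (projt (Y @ [\<alpha>]) t)"
    and "t \<in> S"
  shows "prefix (projt (past S X (partc \<alpha>) @ [\<alpha>]) t) (projt (past S Y (partc \<alpha>) @ [\<alpha>]) t)"
proof -
  define z where "z = past S Y (partc \<alpha>) @ [\<alpha>]"
  have comparable_z: "comparable (projt X0 t) (projt z t)"
    if "t \<in> S" "prefix X0 (X @ [\<alpha>])" for t X0
  proof -
    have "comparable (projt z t) (projt (X @ [\<alpha>]) t)"
      using comparable_prefix[OF prefix_projt_past_snoc[OF that(1)] comparable_sym[OF comparable[OF that(1)]]]
      unfolding z_def .
    then show ?thesis
      using comparable_prefix[OF prefix_projt[OF that(2)] comparable_sym] by blast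
  qed
  have r_prefix: "prefix (projt (X @ [\<alpha>]) r) (projt z r)"
    using r r_eq by (simp add: z_def projt_past projt_single)
  have base: "prefix (projt (X @ [\<alpha>]) t) (projt z t)" if "t \<in> S" "t \<in> partc \<alpha>" for t
    using prefix_projt_transfer[OF _ r(1) that(2) r_prefix comparable_z[OF that(1)]] r_prefix
    by (cases "t = r") auto
  show ?thesis
  proof (cases "t \<in> partt (past S X (partc \<alpha>) @ [\<alpha>])")
    case True
    show ?thesis
      using prefix_projt_past_invariant[OF comparable_z base _ \<open>t \<in> S\<close> True, of "[]"]
      unfolding z_def by simp
  next
    case False
    then show ?thesis by (simp add: projt_eq_Nil_iff[symmetric] projt_single)
  qed
qed

lemma projt_past_eq:
  assumes "r \<in> partc \<alpha>" "r \<in> S" "projt X r = projt Y r"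
    and "\<And>t. t \<in> S \<Longrightarrow> comparable (projt (X @ [\<alpha>]) t) (projt (Y @ [\<alpha>]) t)"
    and "t \<in> S"
  shows "projt (past S X (partc \<alpha>) @ [\<alpha>]) t = projt (past S Y (partc \<alpha>) @ [\<alpha>]) t"
  using prefix_projt_past_if_comparable[OF assms] prefix_projt_past_if_comparable[OF assms(1,2) assms(3)[symmetric] comparable_sym[OF assms(4)] assms(5)]
  by (rule prefix_order.antisym)

lemma cpre_append: "cpre (xs @ ys) \<tau> = cpre xs (cpre ys \<tau>)"
  by (induction xs) (auto simp: Let_def)

lemma projt_cpre: "s \<in> partt \<tau> \<Longrightarrow> projt (cpre xs \<tau>) s = projt xs s @ projt \<tau> s"
  by (simp add: cpre_eq_past projt_past)

lemma partt_past_mono: "T \<subseteq> T' \<Longrightarrow> partt (past S xs T) \<subseteq> partt (past S xs T')"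
  by (induction xs) (auto simp: Let_def)

lemma prefix_projt_past_mono:
  assumes "T \<subseteq> T'" "t \<in> S"
  shows "prefix (projt (past S xs T) t) (projt (past S xs T') t)"
proof (induction xs)
  case (Cons a xs)
  let ?A = "past S xs T" and ?A' = "past S xs T'"
  have sub: "partt ?A \<union> T \<subseteq> partt ?A' \<union> T'"
    using partt_past_mono[OF assms(1)] assms(1) by blast
  show ?case
  proof (cases "partc a \<inter> (partt ?A \<union> T) \<inter> S = {} \<and> t \<in> partc a")
    case True
    then have "projt ?A t = []" using assms(2) by (auto simp: projt_eq_Nil_iff)
    then show ?thesis using True by (simp add: Let_def)
  next
    case False
    then show ?thesis using Cons sub by (auto simp: Let_def projt_Cons)
  qed
qed simp

lemma prefix_projt_cpre_append: "prefix (projt (cpre xs \<tau>) s) (projt (cpre xs (\<tau> @ \<tau>')) s)"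
proof (cases "s \<in> partt \<tau>")
  case True
  then show ?thesis by (simp add: projt_cpre)
next
  case False
  then show ?thesis
    using prefix_projt_past_mono[of "partt \<tau>" "partt \<tau> \<union> partt \<tau>'" s UNIV xs]
    by (simp add: cpre_eq_past projt_eq_Nil_iff[symmetric])
qed

lemma cpre_dependent:
  assumes "prefix (projt w p @ [local_act c p]) (projt (cpre (w' @ c # ys) \<tau>) p)"
    and "projt w' p = projt w p" "p \<in> partc c"
  shows "partc c \<inter> partt (cpre ys \<tau>) \<noteq> {}"
proof
  assume indep: "partc c \<inter> partt (cpre ys \<tau>) = {}"
  then have "cpre (w' @ c # ys) \<tau> = past UNIV w' (partt (cpre ys \<tau>)) @ cpre ys \<tau>"
    by (simp add: cpre_append cpre_eq_past[of w'] Let_def)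
  moreover have "projt (cpre ys \<tau>) p = []"
    using indep assms(3) by (auto simp: projt_eq_Nil_iff)
  ultimately have "prefix (projt (cpre (w' @ c # ys) \<tau>) p) (projt w' p)"
    using prefix_projt_past[of p UNIV w'] by simp
  then show False
    using prefix_length_le[OF assms(1)] prefix_length_le assms(2) by fastforce
qed

lemma cpre_dependent_transfer:
  assumes dep: "D \<inter> partt (cpre X [\<alpha>]) \<noteq> {}"
    and eq: "\<And>t. t \<notin> D \<Longrightarrow>
      projt (past (- D) X (partc \<alpha>) @ [\<alpha>]) t = projt (past (- D) Y (partc \<alpha>) @ [\<alpha>]) t"
  shows "D \<inter> partt (cpre Y [\<alpha>]) \<noteq> {}"
proof (cases "D \<inter> partc \<alpha> = {}")
  case False
  then show ?thesis by (auto simp: cpre_single)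
next
  case True
  moreover have "D \<inter> partt (past UNIV X (partc \<alpha>)) \<noteq> {}"
    using dep True by (auto simp: cpre_single)
  ultimately have "D \<inter> partt (past (- D) X (partc \<alpha>)) \<noteq> {}"
    by (rule past_Compl_meets)
  then obtain e d where e: "e \<in> set (past (- D) X (partc \<alpha>))" "d \<in> partc e" "d \<in> D"
    by (auto simp: partt_def)
  obtain t where t: "t \<in> partc e" "t \<notin> D"
    using past_member_meets[OF e(1)] by blast
  have "local_act e t \<in> set (projt (past (- D) Y (partc \<alpha>) @ [\<alpha>]) t)"
    using local_act_in_projt[of e "past (- D) X (partc \<alpha>) @ [\<alpha>]" t] e(1) t eq by simp
  then obtain e' where e': "e' \<in> set (past (- D) Y (partc \<alpha>) @ [\<alpha>])" "t \<in> partc e'"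
    "local_act e' t = local_act e t"
    by (rule in_set_projtE)
  have "d \<in> partc e'"
    using partner_local_act[OF e'(2)] partner_local_act_eq[OF t(1) e(2)] e(3) t(2) e'(3) by auto
  then have "d \<in> partt (past UNIV Y (partc \<alpha>) @ [\<alpha>])"
    using e'(1) partt_past_subset[of "- D" Y "partc \<alpha>"] by (auto simp: partt_def)
  then show ?thesis using e(3) by (auto simp: cpre_single)
qed

section \<open>Events\<close>

lemma pointed_Cons: "pointed w \<Longrightarrow> partc a \<inter> partt w \<noteq> {} \<Longrightarrow> pointed (a # w)"
  unfolding pointed_def
proof (intro conjI allI impI)
  fix i
  assume w: "w \<noteq> [] \<and> (\<forall>i. Suc i < length w \<longrightarrow>
      (\<exists>j>i. j < length w \<and> partc (w ! i) \<inter> partc (w ! j) \<noteq> {}))"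
    and shared: "partc a \<inter> partt w \<noteq> {}" and i: "Suc i < length (a # w)"
  show "\<exists>j>i. j < length (a # w) \<and> partc ((a # w) ! i) \<inter> partc ((a # w) ! j) \<noteq> {}"
  proof (cases i)
    case 0
    from shared obtain e where "e \<in> set w" "partc a \<inter> partc e \<noteq> {}"
      by (auto simp: partt_def)
    then obtain k where "k < length w" "partc a \<inter> partc (w ! k) \<noteq> {}"
      by (metis in_set_conv_nth)
    then show ?thesis using 0 by (intro exI[of _ "Suc k"]) auto
  next
    case (Suc i')
    then have "Suc i' < length w" using i by simp
    then obtain j where "j > i'" "j < length w" "partc (w ! i') \<inter> partc (w ! j) \<noteq> {}"
      using w by blast
    then show ?thesis using Suc by (intro exI[of _ "Suc j"]) auto
  qed
qed simp

lemma pointed_cpre: "pointed \<tau> \<Longrightarrow> pointed (cpre xs \<tau>)"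
  by (induction xs) (auto simp: Let_def intro: pointed_Cons)

text \<open>A permutation invariant which identifies the last communication of an event.\<close>

fun maximal_comms :: "('p, 'l) trace \<Rightarrow> ('p, 'l) comm set" where
  "maximal_comms [] = {}"
| "maximal_comms (a # w) = (if partc a \<inter> partt w = {} then {a} else {}) \<union> maximal_comms w"

lemma maximal_comms_perm_eq:
  assumes "perm_eq u w"
  shows "maximal_comms u = maximal_comms w"
proof -
  have append: "maximal_comms (z @ x) = maximal_comms (z @ y)"
    if "maximal_comms x = maximal_comms y" "partt x = partt y" for x y z :: "('p, 'l) trace"
    using that by (induction z) auto
  have swap: "maximal_comms x = maximal_comms y" if "swap x y" for x y :: "('p, 'l) trace"
    using that by (induction rule: swap.induct) (rule append; auto)
  from assms show ?thesis
    unfolding perm_eq_def by (induction rule: rtranclp_induct) (auto dest: swap)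
qed

lemma maximal_comms_cpre: "maximal_comms (cpre xs \<tau>) = maximal_comms \<tau>"
  by (induction xs) (auto simp: Let_def)

lemma last_in_maximal_comms: "w \<noteq> [] \<Longrightarrow> last w \<in> maximal_comms w"
  by (induction w) auto

lemma ev_eq_clsD:
  assumes "ev \<rho> = cls (w @ [c])" "\<rho> \<noteq> []"
  shows "last \<rho> = c" "perm_eq (cpre (butlast \<rho>) [c]) (w @ [c])"
proof -
  have pe: "perm_eq (cpre (butlast \<rho>) [last \<rho>]) (w @ [c])"
    using assms(1) unfolding ev_def cls_eq_iff .
  have "c \<in> maximal_comms (cpre (butlast \<rho>) [last \<rho>])"
    using last_in_maximal_comms[of "w @ [c]"] maximal_comms_perm_eq[OF pe] by simp
  then show "last \<rho> = c" by (simp add: maximal_comms_cpre)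
  with pe show "perm_eq (cpre (butlast \<rho>) [c]) (w @ [c])" by simp
qed

lemma cm_ev:
  assumes "ev \<rho> = cls (w @ [c])" "\<rho> \<noteq> []"
  shows "cm (ev \<rho>) = c"
proof -
  define E where "E = cpre (butlast \<rho>) [c]"
  have ev: "ev \<rho> = cls E"
    unfolding ev_def E_def ev_eq_clsD(1)[OF assms] ..
  have "pointed [c]" by (simp add: pointed_def)
  then have "E \<in> ev \<rho> \<and> pointed E"
    unfolding ev E_def cls_def by (simp add: perm_eq_refl pointed_cpre)
  then have "(SOME \<sigma>. \<sigma> \<in> ev \<rho> \<and> pointed \<sigma>) \<in> ev \<rho> \<and> pointed (SOME \<sigma>. \<sigma> \<in> ev \<rho> \<and> pointed \<sigma>)"
    by (rule someI)
  then obtain \<tau> where \<tau>: "cm (ev \<rho>) = last \<tau>" "perm_eq E \<tau>" "\<tau> \<noteq> []"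
    unfolding cm_def ev cls_def pointed_def by blast
  have "last \<tau> \<in> maximal_comms E"
    using last_in_maximal_comms[OF \<tau>(3)] maximal_comms_perm_eq[OF \<tau>(2)] by simp
  then show ?thesis using \<tau>(1) by (simp add: E_def maximal_comms_cpre)
qed

text \<open>The representative w of an event is its own causal past, so projt_past_eq applies.\<close>

lemma projt_past_ev:
  assumes "ev \<rho> = cls (w @ [c])" "\<rho> \<noteq> []" "p \<in> partc c" "projt w' p = projt w p"
    and "\<And>t. comparable (projt (w @ [c]) t) (projt (w' @ [c]) t)"
  shows "projt (past UNIV w' (partc c)) t = projt w t"
proof -
  define E where "E = past UNIV (butlast \<rho>) (partc c)"
  have "perm_eq (E @ [c]) (w @ [c])"
    using ev_eq_clsD(2)[OF assms(1,2)] by (simp add: E_def cpre_single)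
  then have E: "projt (E @ [c]) s = projt (w @ [c]) s" for s
    by (rule perm_eq_projt)
  have "projt (past UNIV E (partc c) @ [c]) t = projt (past UNIV w' (partc c) @ [c]) t"
    using E[of p] assms(3-5) E by (intro projt_past_eq[of p]) auto
  then show ?thesis using E[of t] by (simp add: E_def past_idem)
qed

lemma causal_ev_if_dependent:
  assumes "\<And>t. projt (cpre w [c]) t = projt u t" "partc c \<inter> partt (cpre ys [\<alpha>]) \<noteq> {}"
  shows "causal (cls u) (ev (w @ c # ys @ [\<alpha>]))"
proof -
  define K where "K = cpre w ([c] @ cpre ys [\<alpha>])"
  have ev: "ev (w @ c # ys @ [\<alpha>]) = cls K"
    using assms(2) by (simp add: K_def ev_def cpre_append butlast_append Let_def)
  have "prefix (projt u t) (projt K t)" for t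
    using prefix_projt_cpre_append[of w "[c]"] assms(1) by (simp add: K_def)
  then obtain v where "perm_eq K (u @ v)"
    using perm_eq_append_if_prefix_projt by blast
  then show ?thesis
    unfolding causal_def ev cls_eq_iff using perm_eq_refl by blast
qed

section \<open>Paths in global types and projections\<close>

inductive reach :: "('p, 'l) gty \<Rightarrow> ('p, 'l) trace \<Rightarrow> ('p, 'l) gty \<Rightarrow> bool" where
  reach_Nil: "reach G [] G"
| reach_Cons: "(l, G') \<in> set bs \<Longrightarrow> reach G' w H \<Longrightarrow> reach (Com p q bs) ((p, q, l) # w) H"

inductive_cases reach_NilE: "reach G [] H"
inductive_cases reach_ConsE: "reach G (c # w) H"

lemma is_trace_iff_reach: "is_trace G w \<longleftrightarrow> w \<noteq> [] \<and> (\<exists>H. reach G w H)"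
proof
  assume "is_trace G w"
  then show "w \<noteq> [] \<and> (\<exists>H. reach G w H)"
    by (induction rule: is_trace.induct) (auto intro: reach.intros)
next
  assume "w \<noteq> [] \<and> (\<exists>H. reach G w H)"
  then obtain H where "w \<noteq> []" "reach G w H" by blast
  then show "is_trace G w"
  proof (induction w arbitrary: G)
    case (Cons c w)
    from Cons.prems(2) show ?case
      by (cases rule: reach_ConsE) (use Cons.IH in \<open>auto intro: is_trace.intros elim: reach_NilE\<close>)
  qed simp
qed

lemma reach_append: "reach G (u @ w) H \<longleftrightarrow> (\<exists>M. reach G u M \<and> reach M w H)"
proof (induction u arbitrary: G)
  case Nil then show ?case by (auto intro: reach.intros elim: reach_NilE)
next
  case (Cons c u)
  show ?case
  proof
    assume "reach G ((c # u) @ w) H"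
    then obtain p q l bs G' where g: "G = Com p q bs" "c = (p, q, l)" "(l, G') \<in> set bs"
      "reach G' (u @ w) H"
      by (auto elim: reach_ConsE)
    then obtain M where "reach G' u M" "reach M w H" using Cons.IH by blast
    then show "\<exists>M. reach G (c # u) M \<and> reach M w H" using g by (blast intro: reach.intros)
  next
    assume "\<exists>M. reach G (c # u) M \<and> reach M w H"
    then obtain M p q l bs G' where g: "G = Com p q bs" "c = (p, q, l)" "(l, G') \<in> set bs"
      "reach G' u M" "reach M w H"
      by (auto elim: reach_ConsE)
    then have "reach G' (u @ w) H" using Cons.IH by blast
    then show "reach G ((c # u) @ w) H" using g by (auto intro: reach.intros)
  qed
qed

lemma reach_snocE:
  assumes "reach G (w @ [c]) H"
  obtains p q l bs where "c = (p, q, l)" "reach G w (Com p q bs)" "(l, H) \<in> set bs"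
  using assms unfolding reach_append by (auto elim!: reach_ConsE reach_NilE)

lemma reach_snocI: "reach G w (Com p q bs) \<Longrightarrow> (l, H) \<in> set bs \<Longrightarrow> reach G (w @ [(p, q, l)]) H"
  unfolding reach_append by (auto intro: reach.intros)

lemma partg_End: "partg End = {}"
  by (auto simp: partg_def Tr_def elim: is_trace.cases)

lemma partg_Com: "bs \<noteq> [] \<Longrightarrow> {p, q} \<subseteq> partg (Com p q bs)"
proof -
  assume "bs \<noteq> []"
  then obtain l G' where "(l, G') \<in> set bs" by (cases bs) auto
  then have "is_trace (Com p q bs) [(p, q, l)]" by (rule is_trace.intros)
  then show ?thesis by (force simp: partg_def Tr_def)
qed

lemma partg_branch: "(l, G') \<in> set bs \<Longrightarrow> partg G' \<subseteq> partg (Com p q bs)"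
  by (auto simp: partg_def Tr_def intro: is_trace.intros(2))

lemma wf_gty_ComD:
  "wf_gty (Com p q bs) \<Longrightarrow> bs \<noteq> [] \<and> distinct (map fst bs) \<and> p \<noteq> q \<and> (\<forall>b\<in>set bs. wf_gty (snd b))"
  by (cases rule: wf_gty.cases) auto

lemma wf_gty_branch: "wf_gty (Com p q bs) \<Longrightarrow> (l, G') \<in> set bs \<Longrightarrow> wf_gty G'"
  using wf_gty_ComD by fastforce

lemma wf_gty_reach: "reach G w H \<Longrightarrow> wf_gty G \<Longrightarrow> wf_gty H"
  by (induction rule: reach.induct) (auto dest: wf_gty_branch)

lemma proj_Nil_if_notin_partg:
  assumes "proj H t P" "t \<notin> partg H"
  shows "P = Nil"
  using assms(1)
proof (cases rule: proj.cases)
  case (proj_skip p q bs)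
  then have "partg (snd (hd bs)) \<subseteq> partg H"
    using partg_branch[of "fst (hd bs)" "snd (hd bs)" bs p q] by simp
  with proj_skip assms(2) show ?thesis by blast
qed (use assms(2) in auto)

lemma proj_senderE:
  assumes "wf_gty (Com p q bs)" "proj (Com p q bs) p P"
  obtains cs where "P = Send q cs" "list_all2 (\<lambda>b c. fst b = fst c \<and> proj (snd b) p (snd c)) bs cs"
proof -
  have "p \<in> partg (Com p q bs)" "p \<noteq> q"
    using wf_gty_ComD[OF assms(1)] partg_Com[of bs p q] by auto
  with assms(2) have "\<exists>cs. P = Send q cs \<and> list_all2 (\<lambda>b c. fst b = fst c \<and> proj (snd b) p (snd c)) bs cs"
    by (cases rule: proj.cases) auto
  then show ?thesis using that by blast
qed

lemma proj_receiverE: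
  assumes "wf_gty (Com p q bs)" "proj (Com p q bs) q P"
  obtains cs where "P = Recv p cs" "list_all2 (\<lambda>b c. fst b = fst c \<and> proj (snd b) q (snd c)) bs cs"
proof -
  have "q \<in> partg (Com p q bs)" "p \<noteq> q"
    using wf_gty_ComD[OF assms(1)] partg_Com[of bs p q] by auto
  with assms(2) have "\<exists>cs. P = Recv p cs \<and> list_all2 (\<lambda>b c. fst b = fst c \<and> proj (snd b) q (snd c)) bs cs"
    by (cases rule: proj.cases) auto
  then show ?thesis using that by blast
qed

lemma proj_branch:
  assumes "proj (Com p q bs) t P" "t \<notin> {p, q}" "(l, G') \<in> set bs"
  shows "proj G' t P"
  using assms(1)
proof (cases rule: proj.cases)
  case proj_out
  then have "t \<notin> partg G'" using partg_branch[OF assms(3)] by blast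
  then show ?thesis using proj_out by (auto intro: proj.intros)
qed (use assms in auto)

lemma list_all2_map_fst:
  "list_all2 (\<lambda>b c. fst b = fst c \<and> R (snd b) (snd c)) bs cs \<Longrightarrow> map fst bs = map fst cs"
  by (induction rule: list_all2_induct) auto

lemma list_all2_map_of:
  assumes "list_all2 (\<lambda>b c. fst b = fst c \<and> R (snd b) (snd c)) bs cs" "distinct (map fst bs)"
    and "(l, G') \<in> set bs"
  shows "\<exists>P'. map_of cs l = Some P' \<and> R G' P'"
  using assms
proof (induction rule: list_all2_induct)
  case (Cons b bs c cs)
  show ?case
  proof (cases "b = (l, G')")
    case True
    then show ?thesis using Cons by (cases c) auto
  next
    case False
    then have "(l, G') \<in> set bs" using Cons.prems by simp
    moreover have "fst b \<noteq> l" using Cons.prems calculation by (auto simp: image_iff)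
    ultimately show ?thesis using Cons by (cases c) auto
  qed
qed simp

fun proc_step :: "('p, 'l) proc \<Rightarrow> ('p, 'l) act \<Rightarrow> ('p, 'l) proc option" where
  "proc_step (Send q cs) (Out q' l) = (if q = q' then map_of cs l else None)"
| "proc_step (Recv p cs) (In p' l) = (if p = p' then map_of cs l else None)"
| "proc_step _ _ = None"

fun proc_run :: "('p, 'l) proc \<Rightarrow> ('p, 'l) act list \<Rightarrow> ('p, 'l) proc option" where
  "proc_run P [] = Some P"
| "proc_run P (a # h) = (case proc_step P a of None \<Rightarrow> None | Some P' \<Rightarrow> proc_run P' h)"

lemma proc_run_append:
  "proc_run P (h1 @ h2) = (case proc_run P h1 of None \<Rightarrow> None | Some P' \<Rightarrow> proc_run P' h2)"
  by (induction h1 arbitrary: P) (auto split: option.splits)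

lemma proj_step:
  assumes "wf_gty (Com p q bs)" "proj (Com p q bs) t P" "(l, G') \<in> set bs"
  obtains P' where "proc_run P (projt [(p, q, l)] t) = Some P'" "proj G' t P'"
proof -
  have wf: "distinct (map fst bs)" "p \<noteq> q" using wf_gty_ComD[OF assms(1)] by auto
  consider "t = p" | "t = q" | "t \<notin> {p, q}" by blast
  then show ?thesis
  proof cases
    case 1
    with assms(1,2) obtain cs where "P = Send q cs"
      "list_all2 (\<lambda>b c. fst b = fst c \<and> proj (snd b) p (snd c)) bs cs"
      by (auto elim: proj_senderE)
    with 1 show ?thesis using that list_all2_map_of[OF _ wf(1) assms(3)] by force
  next
    case 2
    with assms(1,2) obtain cs where "P = Recv p cs"
      "list_all2 (\<lambda>b c. fst b = fst c \<and> proj (snd b) q (snd c)) bs cs"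
      by (auto elim: proj_receiverE)
    with 2 show ?thesis using that list_all2_map_of[OF _ wf(1) assms(3)] wf(2) by force
  next
    case 3
    then show ?thesis using that proj_branch[OF assms(2) _ assms(3)] by (simp add: projt_single)
  qed
qed

lemma proj_reach:
  assumes "reach G w H" "wf_gty G" "proj G t P"
  obtains P' where "proc_run P (projt w t) = Some P'" "proj H t P'"
  using assms
proof (induction arbitrary: P thesis rule: reach.induct)
  case (reach_Cons l G' bs w H p q)
  obtain P1 where P1: "proc_run P (projt [(p, q, l)] t) = Some P1" "proj G' t P1"
    using proj_step[OF reach_Cons.prems(2,3) reach_Cons.hyps(1)] .
  obtain P' where "proc_run P1 (projt w t) = Some P'" "proj H t P'"
    using reach_Cons.IH[OF _ wf_gty_branch[OF reach_Cons.prems(2) reach_Cons.hyps(1)] P1(2)] .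
  moreover have "projt ((p, q, l) # w) t = projt [(p, q, l)] t @ projt w t"
    using projt_append[of "[(p, q, l)]" w t] by simp
  ultimately show ?case
    using reach_Cons.prems(1) P1(1) proc_run_append[of P "projt [(p, q, l)] t" "projt w t"] by simp
qed simp

lemma proj_sender_step:
  assumes "wf_gty (Com p q bs)" "proj (Com p q bs) p P" "proc_step P x \<noteq> None"
  obtains l where "x = Out q l" "l \<in> fst ` set bs"
proof -
  obtain cs where cs: "P = Send q cs" "list_all2 (\<lambda>b c. fst b = fst c \<and> proj (snd b) p (snd c)) bs cs"
    using proj_senderE[OF assms(1,2)] .
  have "fst ` set cs = fst ` set bs" using list_all2_map_fst[OF cs(2)] by (metis set_map)
  obtain l where "x = Out q l" "map_of cs l \<noteq> None"
    using assms(3) cs(1) by (cases x) (auto split: if_splits)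
  then show ?thesis
    using that \<open>fst ` set cs = fst ` set bs\<close> map_of_eq_None_iff by metis
qed

lemma proj_receiver_step:
  assumes "wf_gty (Com p q bs)" "proj (Com p q bs) q P" "proc_step P x \<noteq> None"
  obtains l where "x = In p l" "l \<in> fst ` set bs"
proof -
  obtain cs where cs: "P = Recv p cs" "list_all2 (\<lambda>b c. fst b = fst c \<and> proj (snd b) q (snd c)) bs cs"
    using proj_receiverE[OF assms(1,2)] .
  have "fst ` set cs = fst ` set bs" using list_all2_map_fst[OF cs(2)] by (metis set_map)
  obtain l where "x = In p l" "map_of cs l \<noteq> None"
    using assms(3) cs(1) by (cases x) (auto split: if_splits)
  then show ?thesis
    using that \<open>fst ` set cs = fst ` set bs\<close> map_of_eq_None_iff by metis
qed

text \<open>Both choice nodes project on p to the same residual of P, which lists the labels.\<close>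

lemma sender_labels_determined:
  assumes "wf_gty G" "proj G p P"
    and "reach G w1 (Com p q bs1)" "reach G w2 (Com p q bs2)" "projt w1 p = projt w2 p"
  shows "map fst bs1 = map fst bs2"
proof -
  obtain P1 where P1: "proc_run P (projt w1 p) = Some P1" "proj (Com p q bs1) p P1"
    using proj_reach[OF assms(3,1,2)] .
  obtain P2 where P2: "proc_run P (projt w2 p) = Some P2" "proj (Com p q bs2) p P2"
    using proj_reach[OF assms(4,1,2)] .
  have "P1 = P2" using P1(1) P2(1) assms(5) by simp
  obtain cs1 where cs1: "P1 = Send q cs1"
    "list_all2 (\<lambda>b c. fst b = fst c \<and> proj (snd b) p (snd c)) bs1 cs1"
    using proj_senderE[OF wf_gty_reach[OF assms(3,1)] P1(2)] .
  obtain cs2 where cs2: "P2 = Send q cs2"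
    "list_all2 (\<lambda>b c. fst b = fst c \<and> proj (snd b) p (snd c)) bs2 cs2"
    using proj_senderE[OF wf_gty_reach[OF assms(4,1)] P2(2)] .
  have "cs1 = cs2" using cs1(1) cs2(1) \<open>P1 = P2\<close> by simp
  then show ?thesis using list_all2_map_fst[OF cs1(2)] list_all2_map_fst[OF cs2(2)] by simp
qed

definition depth :: "'p \<Rightarrow> ('p, 'l) gty \<Rightarrow> nat" where
  "depth r H = (LEAST n. \<exists>w p q bs. length w = n \<and> reach H w (Com p q bs) \<and> r \<in> {p, q})"

lemma depth_branch_less:
  assumes "r \<in> partg (Com p q bs)" "r \<notin> {p, q}"
  obtains l B where "(l, B) \<in> set bs" "depth r B < depth r (Com p q bs)"
proof -
  let ?H = "Com p q bs"
  let ?D = "\<lambda>H n. \<exists>w p q bs. length w = n \<and> reach H w (Com p q bs) \<and> r \<in> {p, q}"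
  obtain \<sigma> where "is_trace ?H \<sigma>" "r \<in> partt \<sigma>"
    using assms(1) by (auto simp: partg_def Tr_def)
  then obtain c where c: "c \<in> set \<sigma>" "r \<in> partc c"
    by (auto simp: partt_def)
  then obtain w rest where "\<sigma> = (w @ [c]) @ rest"
    by (metis split_list append.assoc append_Cons append_Nil)
  then obtain H'' where "reach ?H ((w @ [c]) @ rest) H''"
    using \<open>is_trace ?H \<sigma>\<close> is_trace_iff_reach by blast
  then obtain H' where "reach ?H (w @ [c]) H'"
    using reach_append by blast
  then obtain p' q' l' bs' where "c = (p', q', l')" "reach ?H w (Com p' q' bs')"
    by (rule reach_snocE)
  then have "?D ?H (length w)" using c(2) by auto
  then have "?D ?H (depth r ?H)"
    unfolding depth_def by (rule LeastI[of "?D ?H"])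
  then obtain w p' q' bs' where w: "length w = depth r ?H" "reach ?H w (Com p' q' bs')" "r \<in> {p', q'}"
    by blast
  then obtain c w' where "w = c # w'"
    using assms(2) by (cases w) (auto elim: reach_NilE)
  with w(2) obtain l B where B: "(l, B) \<in> set bs" "reach B w' (Com p' q' bs')"
    by (auto elim: reach_ConsE)
  then have "depth r B \<le> length w'"
    unfolding depth_def using w(3) by (intro Least_le) auto
  then show ?thesis using that B(1) w(1) \<open>w = c # w'\<close> by simp
qed

section \<open>Replaying a trace in a sibling branch\<close>

text \<open>\<rho> is replayed in G guided by the projections P on N, which G shares with the type
  of \<rho>: communications are added as long as r has not performed its part of \<rho>.  Each step
  either serves a pending action of N, or serves none and moves closer to the next
  communication of r.\<close>

locale replay =
  fixes G :: "('p, 'l) gty" and N :: "'p set" and P :: "'p \<Rightarrow> ('p, 'l) proc"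
    and \<rho> :: "('p, 'l) trace" and r :: 'p
  assumes wf_G: "wf_gty G"
    and proj_P: "\<And>t. t \<in> N \<Longrightarrow> proj G t (P t)"
    and run_P: "\<And>t. t \<in> N \<Longrightarrow> proc_run (P t) (projt \<rho> t) \<noteq> None"
    and r_in_N: "r \<in> N"
begin

definition pending :: "('p, 'l) trace \<Rightarrow> 'p \<Rightarrow> bool" where
  "pending \<zeta> t \<longleftrightarrow> t \<in> N \<and> strict_prefix (projt \<zeta> t) (projt \<rho> t)"

definition consistent :: "('p, 'l) trace \<Rightarrow> bool" where
  "consistent \<zeta> \<longleftrightarrow> (\<forall>t\<in>N. comparable (projt \<zeta> t) (projt \<rho> t))"

definition deficit :: "('p, 'l) trace \<Rightarrow> nat" where
  "deficit \<zeta> = (\<Sum>t \<in> partt \<rho> \<inter> N. length (projt \<rho> t) - length (projt \<zeta> t))"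

lemma prefix_if_not_pending:
  "consistent \<zeta> \<Longrightarrow> t \<in> N \<Longrightarrow> \<not> pending \<zeta> t \<Longrightarrow> prefix (projt \<rho> t) (projt \<zeta> t)"
  unfolding consistent_def pending_def comparable_def strict_prefix_def by auto

lemma pending_next:
  assumes "pending \<zeta> t" "reach G \<zeta> H"
  obtains x R Q where "projt \<rho> t = projt \<zeta> t @ x # R" "proj H t Q" "proc_step Q x \<noteq> None"
proof -
  have t: "t \<in> N" "strict_prefix (projt \<zeta> t) (projt \<rho> t)"
    using assms(1) unfolding pending_def by auto
  then obtain x R where xR: "projt \<rho> t = projt \<zeta> t @ x # R"
    by (auto elim: strict_prefixE')
  obtain Q where Q: "proc_run (P t) (projt \<zeta> t) = Some Q" "proj H t Q"
    using proj_reach[OF assms(2) wf_G proj_P[OF t(1)]] .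
  have "proc_run Q (x # R) \<noteq> None"
    using run_P[OF t(1)] xR Q(1) proc_run_append[of "P t" "projt \<zeta> t" "x # R"] by simp
  then have "proc_step Q x \<noteq> None"
    by (auto split: option.splits)
  then show ?thesis using that xR Q(2) by blast
qed

lemma pending_sender:
  assumes "pending \<zeta> p" "reach G \<zeta> (Com p q bs)"
  obtains l R where "projt \<rho> p = projt \<zeta> p @ Out q l # R" "l \<in> fst ` set bs"
proof -
  obtain x R Q where xRQ: "projt \<rho> p = projt \<zeta> p @ x # R" "proj (Com p q bs) p Q" "proc_step Q x \<noteq> None"
    using pending_next[OF assms] .
  moreover obtain l where "x = Out q l" "l \<in> fst ` set bs"
    using proj_sender_step[OF wf_gty_reach[OF assms(2) wf_G] xRQ(2,3)] .
  ultimately show ?thesis using that by blast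
qed

lemma pending_receiver:
  assumes "pending \<zeta> q" "reach G \<zeta> (Com p q bs)"
  obtains l R where "projt \<rho> q = projt \<zeta> q @ In p l # R" "l \<in> fst ` set bs"
proof -
  obtain x R Q where xRQ: "projt \<rho> q = projt \<zeta> q @ x # R" "proj (Com p q bs) q Q" "proc_step Q x \<noteq> None"
    using pending_next[OF assms] .
  moreover obtain l where "x = In p l" "l \<in> fst ` set bs"
    using proj_receiver_step[OF wf_gty_reach[OF assms(2) wf_G] xRQ(2,3)] .
  ultimately show ?thesis using that by blast
qed

lemma consistent_snoc:
  assumes "consistent \<zeta>"
    and "\<And>t. t \<in> partc c \<Longrightarrow> pending \<zeta> t \<Longrightarrow> prefix (projt (\<zeta> @ [c]) t) (projt \<rho> t)"
  shows "consistent (\<zeta> @ [c])"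
  unfolding consistent_def
proof
  fix t assume t: "t \<in> N"
  consider "t \<notin> partc c" | "t \<in> partc c" "pending \<zeta> t" | "\<not> pending \<zeta> t" by blast
  then show "comparable (projt (\<zeta> @ [c]) t) (projt \<rho> t)"
  proof cases
    case 1
    then show ?thesis using assms(1) t by (simp add: consistent_def projt_single)
  next
    case 2
    then show ?thesis using assms(2) by (blast intro: comparable_if_prefix)
  next
    case 3
    then have "prefix (projt \<rho> t) (projt \<zeta> t @ projt [c] t)"
      using prefix_if_not_pending[OF assms(1) t] by (auto simp: prefix_def)
    then show ?thesis by (simp add: comparable_def)
  qed
qed

lemma deficit_snoc_less:
  assumes "pending \<zeta> t" "t \<in> partc c"
  shows "deficit (\<zeta> @ [c]) < deficit \<zeta>"
  unfolding deficit_def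
proof (rule sum_strict_mono_ex1)
  have t: "t \<in> N" "strict_prefix (projt \<zeta> t) (projt \<rho> t)"
    using assms(1) unfolding pending_def by auto
  then have "projt \<rho> t \<noteq> []" by (auto simp: strict_prefix_def)
  then have "t \<in> partt \<rho> \<inter> N" using t(1) by (simp add: projt_eq_Nil_iff)
  then show "\<exists>t\<in>partt \<rho> \<inter> N.
      length (projt \<rho> t) - length (projt (\<zeta> @ [c]) t) < length (projt \<rho> t) - length (projt \<zeta> t)"
    using prefix_length_less[OF t(2)] assms(2) by (intro bexI[of _ t]) (auto simp: projt_single)
qed (auto simp: finite_partt intro: diff_le_mono2)

lemma deficit_snoc_eq:
  assumes "consistent \<zeta>" "\<And>t. t \<in> partc c \<Longrightarrow> \<not> pending \<zeta> t"
  shows "deficit (\<zeta> @ [c]) = deficit \<zeta>"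
  unfolding deficit_def
proof (rule sum.cong[OF refl])
  fix t assume t: "t \<in> partt \<rho> \<inter> N"
  show "length (projt \<rho> t) - length (projt (\<zeta> @ [c]) t) = length (projt \<rho> t) - length (projt \<zeta> t)"
  proof (cases "t \<in> partc c")
    case True
    then have "length (projt \<rho> t) \<le> length (projt \<zeta> t)"
      using prefix_if_not_pending[OF assms(1)] assms(2) t prefix_length_le by blast
    then show ?thesis by simp
  next
    case False
    then show ?thesis by (simp add: projt_single)
  qed
qed

text \<open>The communication to add at a choice p \<rightarrow> q: the next label of p if p is pending,
  else the next label of q if q is pending (the two agree by matching_labels), else any
  branch closer to r.\<close>

lemma replay_step:
  assumes "reach G \<zeta> H" "consistent \<zeta>" "pending \<zeta> r"
  obtains c B where "reach G (\<zeta> @ [c]) B"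
    "\<forall>t\<in>partc c. pending \<zeta> t \<longrightarrow> prefix (projt (\<zeta> @ [c]) t) (projt \<rho> t)"
    "(\<exists>t\<in>partc c. pending \<zeta> t) \<or> depth r B < depth r H"
proof -
  obtain x R Q where Q: "proj H r Q" "proc_step Q x \<noteq> None"
    using pending_next[OF assms(3,1)] by blast
  have "Q \<noteq> Nil" using Q(2) by auto
  then have "r \<in> partg H" using proj_Nil_if_notin_partg[OF Q(1)] by blast
  then obtain p q bs where H: "H = Com p q bs" using partg_End by (cases H) auto
  have reach: "reach G \<zeta> (Com p q bs)" using assms(1) H by simp
  have "p \<noteq> q" using wf_gty_ComD[OF wf_gty_reach[OF reach wf_G]] by blast
  consider (sender) "pending \<zeta> p" | (receiver) "\<not> pending \<zeta> p" "pending \<zeta> q"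
    | (neither) "\<not> pending \<zeta> p" "\<not> pending \<zeta> q" by blast
  then show ?thesis
  proof cases
    case sender
    obtain l R where l: "projt \<rho> p = projt \<zeta> p @ Out q l # R" "l \<in> fst ` set bs"
      using pending_sender[OF sender reach] .
    then obtain B where B: "(l, B) \<in> set bs" by auto
    have "prefix (projt (\<zeta> @ [(p, q, l)]) t) (projt \<rho> t)"
      if t: "t \<in> partc (p, q, l)" "pending \<zeta> t" for t
    proof -
      from t(1) consider "t = p" | "t = q" by auto
      then show ?thesis
      proof cases
        case 1
        then show ?thesis using l(1) by (simp add: projt_single)
      next
        case 2
        obtain l' R' where "projt \<rho> q = projt \<zeta> q @ In p l' # R'"
          using pending_receiver[OF t(2)[unfolded 2] reach] .
        moreover have "l = l'" using matching_labels[OF \<open>p \<noteq> q\<close> l(1) calculation] .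
        ultimately show ?thesis using \<open>p \<noteq> q\<close> 2 by (simp add: projt_single)
      qed
    qed
    moreover have "\<exists>t\<in>partc (p, q, l). pending \<zeta> t" using sender by auto
    ultimately show ?thesis using that reach_snocI[OF reach B] by blast
  next
    case receiver
    obtain l R where l: "projt \<rho> q = projt \<zeta> q @ In p l # R" "l \<in> fst ` set bs"
      using pending_receiver[OF receiver(2) reach] .
    then obtain B where B: "(l, B) \<in> set bs" by auto
    have "prefix (projt (\<zeta> @ [(p, q, l)]) t) (projt \<rho> t)"
      if "t \<in> partc (p, q, l)" "pending \<zeta> t" for t
      using that receiver l(1) \<open>p \<noteq> q\<close> by (auto simp: projt_single)
    moreover have "\<exists>t\<in>partc (p, q, l). pending \<zeta> t" using receiver by auto
    ultimately show ?thesis using that reach_snocI[OF reach B] by blast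
  next
    case neither
    then have "r \<notin> {p, q}" using assms(3) by auto
    then obtain l B where B: "(l, B) \<in> set bs" "depth r B < depth r H"
      using depth_branch_less[of r p q bs] \<open>r \<in> partg H\<close> H by blast
    have "\<not> pending \<zeta> t" if "t \<in> partc (p, q, l)" for t
      using that neither by auto
    then show ?thesis using that[OF reach_snocI[OF reach B(1)]] B(2) by blast
  qed
qed

lemma replay_trace:
  assumes "\<rho> \<noteq> []" "r \<in> partc (last \<rho>)"
  shows "\<exists>\<rho>'. is_trace G \<rho>' \<and> last \<rho>' = last \<rho> \<and> projt \<rho>' r = projt \<rho> r \<and> consistent \<rho>'"
proof -
  have "\<exists>\<rho>'. is_trace G \<rho>' \<and> last \<rho>' = last \<rho> \<and> projt \<rho>' r = projt \<rho> r \<and> consistent \<rho>'"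
    if "reach G \<zeta> H" "consistent \<zeta>" "pending \<zeta> r" for \<zeta> H
    using that
  proof (induction "(\<zeta>, H)" arbitrary: \<zeta> H
      rule: wf_induct_rule[OF wf_measures[of "[\<lambda>(\<zeta>, H). deficit \<zeta>, \<lambda>(\<zeta>, H). depth r H]"], case_names less])
    case less
    obtain c B where step: "reach G (\<zeta> @ [c]) B"
      "\<forall>t\<in>partc c. pending \<zeta> t \<longrightarrow> prefix (projt (\<zeta> @ [c]) t) (projt \<rho> t)"
      "(\<exists>t\<in>partc c. pending \<zeta> t) \<or> depth r B < depth r H"
      using replay_step[OF less.prems] .
    have consistent: "consistent (\<zeta> @ [c])"
      using consistent_snoc[OF less.prems(2)] step(2) by blast
    have r_prefix: "prefix (projt (\<zeta> @ [c]) r) (projt \<rho> r)"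
      using step(2) less.prems(3)
      by (cases "r \<in> partc c") (auto simp: pending_def projt_single strict_prefix_def)
    show ?case
    proof (cases "pending (\<zeta> @ [c]) r")
      case True
      have "deficit (\<zeta> @ [c]) < deficit \<zeta> \<or> deficit (\<zeta> @ [c]) = deficit \<zeta> \<and> depth r B < depth r H"
        using step(3) deficit_snoc_less deficit_snoc_eq[OF less.prems(2)] by blast
      then show ?thesis using less.hyps[of "\<zeta> @ [c]" B] step(1) consistent True by auto
    next
      case False
      then have r_eq: "projt (\<zeta> @ [c]) r = projt \<rho> r"
        using r_prefix r_in_N by (auto simp: pending_def strict_prefix_def)
      then have "r \<in> partc c"
        using less.prems(3) by (auto simp: pending_def projt_single strict_prefix_def split: if_splits)
      then have "last (\<zeta> @ [c]) = last \<rho>"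
        using last_eq_if_projt_eq[OF _ assms(1) _ assms(2) r_eq] by simp
      then show ?thesis using step(1) consistent r_eq is_trace_iff_reach by blast
    qed
  qed
  moreover have "r \<in> partt \<rho>"
    using assms by (auto simp: partt_def)
  then have "projt \<rho> r \<noteq> []"
    by (simp add: projt_eq_Nil_iff)
  then have "pending [] r"
    using r_in_N by (auto simp: pending_def strict_prefix_def)
  moreover have "consistent []"
    by (simp add: consistent_def comparable_def)
  ultimately show ?thesis using reach_Nil by blast
qed

end

lemma replay_in_branch:
  assumes "wf_gty G1" "wf_gty G2" "is_trace G1 \<rho>" "r \<in> N" "r \<in> partc (last \<rho>)"
    and "\<And>t. t \<in> N \<Longrightarrow> \<exists>P. proj G1 t P \<and> proj G2 t P"
  obtains \<rho>' where "is_trace G2 \<rho>'" "last \<rho>' = last \<rho>" "projt \<rho>' r = projt \<rho> r"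
    "\<forall>t\<in>N. comparable (projt \<rho>' t) (projt \<rho> t)"
proof -
  obtain P where P: "\<And>t. t \<in> N \<Longrightarrow> proj G1 t (P t) \<and> proj G2 t (P t)"
    using assms(6) by metis
  obtain H where "reach G1 \<rho> H" "\<rho> \<noteq> []"
    using assms(3) is_trace_iff_reach by blast
  have "proc_run (P t) (projt \<rho> t) \<noteq> None" if "t \<in> N" for t
    using proj_reach[OF \<open>reach G1 \<rho> H\<close> assms(1)] P[OF that] by (metis option.distinct(1))
  then interpret replay G2 N P \<rho> r
    using assms(2,4) P by unfold_locales auto
  show ?thesis
    using replay_trace[OF \<open>\<rho> \<noteq> []\<close> assms(5)] that unfolding consistent_def by blast
qed

section \<open>Semantic projectability\<close>

lemma projt_ev_snoc:
  assumes "ev \<rho> = cls (w @ [\<alpha>])" "\<rho> \<noteq> []" "r \<in> partc \<alpha>"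
  shows "projt w r = projt (butlast \<rho>) r"
proof -
  have "projt (cpre (butlast \<rho>) [\<alpha>]) r = projt (w @ [\<alpha>]) r"
    using perm_eq_projt[OF ev_eq_clsD(2)[OF assms(1,2)]] .
  then show ?thesis using assms(3) by (simp add: projt_cpre)
qed

lemma causal_ev_projt_prefix:
  assumes "ev \<rho> = cls (w @ [\<alpha>])" "\<rho> \<noteq> []" "causal (cls u) (cls (w @ [\<alpha>]))"
  shows "prefix (projt u s) (projt (cpre (butlast \<rho>) [\<alpha>]) s)" "prefix (projt u s) (projt \<rho> s)"
proof -
  show u: "prefix (projt u s) (projt (cpre (butlast \<rho>) [\<alpha>]) s)"
    using causal_projt_prefix[OF assms(3)] perm_eq_projt[OF ev_eq_clsD(2)[OF assms(1,2)]] by simp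
  have "\<rho> = butlast \<rho> @ [\<alpha>]"
    using ev_eq_clsD(1)[OF assms(1,2)] assms(2) by (metis append_butlast_last_id)
  then have "prefix (projt (cpre (butlast \<rho>) [\<alpha>]) s) (projt \<rho> s)"
    using prefix_projt_past_snoc[of s UNIV "butlast \<rho>" \<alpha>] by (simp add: cpre_single)
  with u show "prefix (projt u s) (projt \<rho> s)" by (rule prefix_order.trans)
qed

lemma branching_decomposition:
  assumes wf: "wf_gty G"
    and ev_a: "ev \<rho>a = cls (\<sigma> @ [(p, q, l)])" "\<rho>a \<noteq> []"
    and ev_1: "is_trace G \<rho>1" "ev \<rho>1 = cls (\<sigma>1 @ [\<alpha>])"
    and causal: "causal (cls (\<sigma> @ [(p, q, l)])) (cls (\<sigma>1 @ [\<alpha>]))"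
    and r: "r \<in> partc \<alpha>" "r \<notin> {p, q}"
  obtains \<rho>0 bs G1 \<rho>' where "reach G \<rho>0 (Com p q bs)" "(l, G1) \<in> set bs"
    "is_trace G1 \<rho>'" "last \<rho>' = \<alpha>" "projt \<rho>0 p = projt \<sigma> p"
    "{p, q} \<inter> partt (cpre (butlast \<rho>') [\<alpha>]) \<noteq> {}"
    "\<forall>t. projt (past UNIV \<rho>0 {p, q}) t = projt \<sigma> t"
    "projt \<sigma>1 r = projt \<rho>0 r @ projt (butlast \<rho>') r"
proof -
  let ?x = "(p, q, l)"
  have "\<rho>1 \<noteq> []" using ev_1(1) is_trace_iff_reach by blast
  note below = causal_ev_projt_prefix[OF ev_1(2) this causal]
  have "prefix (projt \<sigma> p @ [local_act ?x p]) (projt \<rho>1 p)"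
    using below(2)[of p] by (simp add: projt_single)
  then obtain \<rho>0 \<rho>' where \<rho>1: "\<rho>1 = \<rho>0 @ ?x # \<rho>'" and p: "projt \<rho>0 p = projt \<sigma> p"
    by (rule split_at_projt) simp
  have last: "last \<rho>1 = \<alpha>"
    using ev_eq_clsD(1)[OF ev_1(2) \<open>\<rho>1 \<noteq> []\<close>] .
  then have "\<rho>' \<noteq> []" using \<rho>1 r by auto
  then have last': "last \<rho>' = \<alpha>" and butlast: "butlast \<rho>1 = \<rho>0 @ ?x # butlast \<rho>'"
    using \<rho>1 last by (simp_all add: butlast_append)
  have "partc ?x \<inter> partt (cpre (butlast \<rho>') [\<alpha>]) \<noteq> {}"
    by (rule cpre_dependent[OF _ p]) (use below(1)[of p] butlast in \<open>simp_all add: projt_single\<close>)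
  then have "{p, q} \<inter> partt (cpre (butlast \<rho>') [\<alpha>]) \<noteq> {}" by simp
  moreover obtain H where "reach G \<rho>1 H" using ev_1(1) is_trace_iff_reach by blast
  then obtain bs G1 where "reach G \<rho>0 (Com p q bs)" "(l, G1) \<in> set bs" "reach G1 \<rho>' H"
    unfolding \<rho>1 reach_append by (auto elim: reach_ConsE)
  moreover have "projt (past UNIV \<rho>0 {p, q}) t = projt \<sigma> t" for t
  proof -
    have "prefix (projt (\<rho>0 @ [?x]) s) (projt \<rho>1 s)" for s
      unfolding \<rho>1 by (rule prefix_projt) simp
    then have "comparable (projt (\<sigma> @ [?x]) s) (projt (\<rho>0 @ [?x]) s)" for s
      using below(2) by (blast intro: comparable_if_common_extension)
    then show ?thesis using projt_past_ev[OF ev_a _ p] by simp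
  qed
  moreover have "projt \<sigma>1 r = projt \<rho>0 r @ projt (butlast \<rho>') r"
    using projt_ev_snoc[OF ev_1(2) \<open>\<rho>1 \<noteq> []\<close> r(1)] butlast r(2) by (simp add: projt_Cons)
  ultimately show ?thesis
    using that p last' \<open>\<rho>' \<noteq> []\<close> is_trace_iff_reach by blast
qed

lemma conflict_label_offered:
  assumes "wf_gty G" "projectable G" "reach G \<rho>0 (Com p q bs)" "projt \<rho>0 p = projt \<sigma> p"
    and "is_trace G \<rho>b" "ev \<rho>b = cls (\<sigma> @ [(p, q, l)])"
  shows "l \<in> fst ` set bs"
proof -
  obtain P where P: "proj G p P" using assms(2) unfolding projectable_def by blast
  have "\<rho>b \<noteq> []" using assms(5) is_trace_iff_reach by blast
  then have "\<rho>b = butlast \<rho>b @ [(p, q, l)]"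
    using ev_eq_clsD(1)[OF assms(6)] by (metis append_butlast_last_id)
  moreover obtain H where "reach G \<rho>b H" using assms(5) is_trace_iff_reach by blast
  ultimately obtain bs' where bs': "reach G (butlast \<rho>b) (Com p q bs')" "(l, H) \<in> set bs'"
    by (metis reach_snocE prod.inject)
  have "projt (butlast \<rho>b) p = projt \<rho>0 p"
    using projt_ev_snoc[OF assms(6) \<open>\<rho>b \<noteq> []\<close>] assms(4) by simp
  then have "map fst bs = map fst bs'"
    using sender_labels_determined[OF assms(1) P assms(3) bs'(1)] by simp
  then show ?thesis using bs'(2) by (metis fst_conv image_eqI set_map)
qed

lemma ev_through_branch:
  assumes "reach G \<rho>0 (Com p q bs)" "(l, G') \<in> set bs" "is_trace G' \<rho>" "last \<rho> = \<alpha>"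
    and "{p, q} \<inter> partt (cpre (butlast \<rho>) [\<alpha>]) \<noteq> {}"
    and "\<And>t. projt (past UNIV \<rho>0 {p, q}) t = projt \<sigma> t"
    and "r \<in> partc \<alpha>" "r \<notin> {p, q}"
  obtains \<sigma>2 where "cls (\<sigma>2 @ [\<alpha>]) \<in> events G" "causal (cls (\<sigma> @ [(p, q, l)])) (cls (\<sigma>2 @ [\<alpha>]))"
    "projt \<sigma>2 r = projt \<rho>0 r @ projt (butlast \<rho>) r"
proof -
  let ?\<rho>2 = "\<rho>0 @ (p, q, l) # butlast \<rho> @ [\<alpha>]"
  have "\<rho> \<noteq> []" using assms(3) is_trace_iff_reach by blast
  then have \<rho>: "\<rho> = butlast \<rho> @ [\<alpha>]" using assms(4) by (metis append_butlast_last_id)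
  obtain H where "reach G' \<rho> H" using assms(3) is_trace_iff_reach by blast
  then have "reach G ?\<rho>2 H"
    using assms(1,2) \<rho> unfolding reach_append by (auto intro: reach.intros)
  then have "ev ?\<rho>2 \<in> events G"
    unfolding events_def Tr_def is_trace_iff_reach by auto
  moreover have "ev ?\<rho>2 = cls (past UNIV (butlast ?\<rho>2) (partc \<alpha>) @ [\<alpha>])"
    by (simp add: ev_def cpre_single)
  moreover have "causal (cls (\<sigma> @ [(p, q, l)])) (ev ?\<rho>2)"
    using assms(5,6) by (intro causal_ev_if_dependent) (simp_all add: cpre_single)
  moreover have "projt (past UNIV (butlast ?\<rho>2) (partc \<alpha>)) r = projt \<rho>0 r @ projt (butlast \<rho>) r"
    using assms(7,8) by (simp add: projt_past butlast_append projt_Cons)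
  ultimately show ?thesis using that by simp
qed

lemma conflicting_extension:
  assumes wf: "wf_gty G" and projectable: "projectable G"
    and M: "reach G \<rho>0 (Com p q bs)" and G1: "(l1, G1) \<in> set bs" and G2: "(l2, G2) \<in> set bs"
    and \<rho>: "is_trace G1 \<rho>" "last \<rho> = \<alpha>" and r: "r \<in> partc \<alpha>" "r \<notin> {p, q}"
    and dependent: "{p, q} \<inter> partt (cpre (butlast \<rho>) [\<alpha>]) \<noteq> {}"
    and past: "\<And>t. projt (past UNIV \<rho>0 {p, q}) t = projt \<sigma> t"
  obtains \<sigma>2 where "cls (\<sigma>2 @ [\<alpha>]) \<in> events G" "causal (cls (\<sigma> @ [(p, q, l2)])) (cls (\<sigma>2 @ [\<alpha>]))"
    "projt \<sigma>2 r = projt \<rho>0 r @ projt (butlast \<rho>) r"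
proof -
  have wf_M: "wf_gty (Com p q bs)" using wf_gty_reach[OF M wf] .
  have common: "\<exists>P. proj G1 t P \<and> proj G2 t P" if "t \<in> - {p, q}" for t
  proof -
    obtain P0 where "proj G t P0" using projectable unfolding projectable_def by blast
    then obtain P where "proc_run P0 (projt \<rho>0 t) = Some P" "proj (Com p q bs) t P"
      by (rule proj_reach[OF M wf])
    moreover have "t \<notin> {p, q}" using that by simp
    ultimately show ?thesis using proj_branch[of p q bs t P] G1 G2 by blast
  qed
  have "r \<in> - {p, q}" "r \<in> partc (last \<rho>)" using r \<rho>(2) by auto
  then obtain \<rho>' where \<rho>': "is_trace G2 \<rho>'" "last \<rho>' = last \<rho>" "projt \<rho>' r = projt \<rho> r"
    "\<forall>t\<in>- {p, q}. comparable (projt \<rho>' t) (projt \<rho> t)"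
    by (rule replay_in_branch[OF wf_gty_branch[OF wf_M G1] wf_gty_branch[OF wf_M G2] \<rho>(1) _ _ common])
  have "\<rho> \<noteq> []" "\<rho>' \<noteq> []" using \<rho>(1) \<rho>'(1) by (simp_all add: is_trace_iff_reach)
  then have split: "\<rho> = butlast \<rho> @ [\<alpha>]" "\<rho>' = butlast \<rho>' @ [\<alpha>]"
    using append_butlast_last_id[of \<rho>] append_butlast_last_id[of \<rho>'] \<rho>(2) \<rho>'(2) by simp_all
  have r_eq: "projt (butlast \<rho>) r = projt (butlast \<rho>') r"
    using \<rho>'(3) arg_cong[OF split(1), of "\<lambda>w. projt w r"] arg_cong[OF split(2), of "\<lambda>w. projt w r"]
    by simp
  have comparable: "comparable (projt (butlast \<rho> @ [\<alpha>]) t) (projt (butlast \<rho>' @ [\<alpha>]) t)"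
    if "t \<in> - {p, q}" for t
    unfolding split[symmetric] using \<rho>'(4) that comparable_sym by blast
  have "projt (past (- {p, q}) (butlast \<rho>) (partc \<alpha>) @ [\<alpha>]) t =
      projt (past (- {p, q}) (butlast \<rho>') (partc \<alpha>) @ [\<alpha>]) t" if "t \<notin> {p, q}" for t
    by (rule projt_past_eq[OF r(1) _ r_eq comparable]) (use r(2) that in auto)
  then have "{p, q} \<inter> partt (cpre (butlast \<rho>') [\<alpha>]) \<noteq> {}"
    by (rule cpre_dependent_transfer[OF dependent])
  moreover have "last \<rho>' = \<alpha>" using \<rho>'(2) \<rho>(2) by simp
  ultimately obtain \<sigma>2 where \<sigma>2: "cls (\<sigma>2 @ [\<alpha>]) \<in> events G"
    "causal (cls (\<sigma> @ [(p, q, l2)])) (cls (\<sigma>2 @ [\<alpha>]))"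
    "projt \<sigma>2 r = projt \<rho>0 r @ projt (butlast \<rho>') r"
    using ev_through_branch[OF M G2 \<rho>'(1) _ _ past r] by blast
  show ?thesis using that[OF \<sigma>2(1,2)] \<sigma>2(3) r_eq by simp
qed

theorem mainTheorem3:
  fixes G :: "('p, 'l) gty"
  assumes "wf_gty G" and "regular G" and "projectable G"
  shows "sem_projectable G"
  unfolding sem_projectable_def
proof (intro allI impI)
  fix \<gamma>1 \<gamma>2 \<sigma>1 \<alpha> r
  assume "initial_conflict G \<gamma>1 \<gamma>2"
    and ext: "cls (\<sigma>1 @ [\<alpha>]) \<in> events G \<and> causal \<gamma>1 (cls (\<sigma>1 @ [\<alpha>])) \<and> r \<in> partc \<alpha> - partc (cm \<gamma>1)"
  then obtain \<sigma> p q l1 l2 \<rho>a \<rho>b where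
    \<gamma>: "\<gamma>1 = cls (\<sigma> @ [(p, q, l1)])" "\<gamma>2 = cls (\<sigma> @ [(p, q, l2)])" and
    \<rho>a: "is_trace G \<rho>a" "ev \<rho>a = cls (\<sigma> @ [(p, q, l1)])" and
    \<rho>b: "is_trace G \<rho>b" "ev \<rho>b = cls (\<sigma> @ [(p, q, l2)])"
    unfolding initial_conflict_def events_def Tr_def by auto
  obtain \<rho>1 where \<rho>1: "is_trace G \<rho>1" "ev \<rho>1 = cls (\<sigma>1 @ [\<alpha>])"
    using ext unfolding events_def Tr_def by auto
  have "\<rho>a \<noteq> []" using \<rho>a(1) is_trace_iff_reach by blast
  then have "cm \<gamma>1 = (p, q, l1)" using cm_ev[OF \<rho>a(2)] \<gamma>(1) \<rho>a(2) by simp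
  then have r: "r \<in> partc \<alpha>" "r \<notin> {p, q}" using ext by auto
  have "causal (cls (\<sigma> @ [(p, q, l1)])) (cls (\<sigma>1 @ [\<alpha>]))" using ext \<gamma>(1) by simp
  then obtain \<rho>0 bs G1 \<rho>' where \<rho>0: "reach G \<rho>0 (Com p q bs)" "(l1, G1) \<in> set bs"
    "is_trace G1 \<rho>'" "last \<rho>' = \<alpha>" "projt \<rho>0 p = projt \<sigma> p"
    "{p, q} \<inter> partt (cpre (butlast \<rho>') [\<alpha>]) \<noteq> {}"
    "\<forall>t. projt (past UNIV \<rho>0 {p, q}) t = projt \<sigma> t"
    "projt \<sigma>1 r = projt \<rho>0 r @ projt (butlast \<rho>') r"
    using branching_decomposition[OF assms(1) \<rho>a(2) \<open>\<rho>a \<noteq> []\<close> \<rho>1 _ r] by blast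
  obtain G2 where "(l2, G2) \<in> set bs"
    using conflict_label_offered[OF assms(1,3) \<rho>0(1,5) \<rho>b] by auto
  then obtain \<sigma>2 where "cls (\<sigma>2 @ [\<alpha>]) \<in> events G" "causal \<gamma>2 (cls (\<sigma>2 @ [\<alpha>]))"
    "projt \<sigma>2 r = projt \<sigma>1 r"
    using conflicting_extension[OF assms(1,3) \<rho>0(1,2) _ \<rho>0(3,4) r \<rho>0(6)] \<rho>0(7,8) \<gamma>(2) by metis
  then show "\<exists>\<sigma>2. cls (\<sigma>2 @ [\<alpha>]) \<in> events G \<and> causal \<gamma>2 (cls (\<sigma>2 @ [\<alpha>])) \<and> projt \<sigma>2 r = projt \<sigma>1 r"
    by blast
qed

end
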